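(* Consider the curve time series model described in the context, in which $X_t(\cdot)$ is $d$-dimensional with dynamic space $\mathcal{M}=\operatorname{span}\{\varphi_1,\ldots,\varphi_d\}$. Suppose the $d\times d$ matrix $\Sigma_{k_0}=E(\xi_t\xi_{t+k_0}')$ has full rank $d$ for some integer $k_0\ge 1$. Then: (i) the operator $N_{k_0}$ on $L_2(\mathcal{I})$ has exactly $d$ nonzero eigenvalues, and $\mathcal{M}$ is the linear space spanned by the corresponding $d$ eigenfunctions; (ii) for every integer $p\ge k_0$, the statement in (i) also holds for the operator $K=\sum_{k=1}^p N_k$.
   Context: Let $\mathcal{I}$ be a compact interval and $L_2(\mathcal{I})$ the Hilbert space of square-integrable functions on $\mathcal{I}$ with inner product $\langle f,g\rangle=\int_{\mathcal{I}} f(u)g(u)\,du$. A function $L(u,v)$ on $\mathcal{I}\times\mathcal{I}$ is identified with the integral operator $g\mapsto \int_{\mathcal{I}}L(\cdot,v)g(v)\,dv$. Curves satisfy $Y_t(u)=X_t(u)+\varepsilon_t(u)$, $u\in\mathcal{I}$, $t\in\mathbb{Z}$, where: $E\varepsilon_t(u)=0$ and $\operatorname{cov}(\varepsilon_t(u),\varepsilon_s(v))=0$ for all $u,v$ whenever $t\ne s$; $\int_{\mathcal{I}}E\{X_t(u)^2+\varepsilon_t(u)^2\}\,du<\infty$; $\mu(u)=E X_t(u)$ and $M_k(u,v)=\operatorname{cov}(X_t(u),X_{t+k}(v))$ do not depend on $t$; and $X_t(\cdot)$ and $\varepsilon_{t+k}(\cdot)$ are uncorrelated for all integers $k$. Write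 the spectral decomposition $M_0(u,v)=\sum_{j\ge1}\lambda_j\varphi_j(u)\varphi_j(v)$ with $\lambda_1\ge\lambda_2\ge\cdots\ge0$ and orthonormal $\varphi_j$, so that $X_t(u)-\mu(u)=\sum_j\xi_{tj}\varphi_j(u)$ with $\xi_{tj}=\langle X_t-\mu,\varphi_j\rangle$ (Karhunen–Loève expansion; $E\xi_{tj}=0$, $\operatorname{var}(\xi_{tj})=\lambda_j$, $\operatorname{cov}(\xi_{ti},\xi_{tj})=0$ for $i\neq j$). $X_t$ is called $d$-dimensional ($d\ge1$ finite) if $\lambda_d\ne0$ and $\lambda_{d+1}=0$; then $\mathcal{M}=\operatorname{span}\{\varphi_1,\ldots,\varphi_d\}$ and $\xi_t=(\xi_{t1},\ldots,\xi_{td})'$. Define $N_k(u,v)=\int_{\mathcal{I}}M_k(u,z)M_k(v,z)\,dz$ and, for an integer $p\ge1$, $K(u,v)=\sum_{k=1}^p N_k(u,v)$. *)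

theory Defs
  imports "HOL-Analysis.Analysis" "HOL-Probability.Probability"
begin

text \<open>Elements of L2(I), I a compact interval, are represented by real functions;
  equality in L2(I) is equality almost everywhere on I.\<close>

definition L2 :: "real set \<Rightarrow> (real \<Rightarrow> real) \<Rightarrow> bool" where
  "L2 I f \<longleftrightarrow> f \<in> borel_measurable lborel \<and> set_integrable lborel I (\<lambda>u. (f u)\<^sup>2)"

definition l2_inner :: "real set \<Rightarrow> (real \<Rightarrow> real) \<Rightarrow> (real \<Rightarrow> real) \<Rightarrow> real" where
  "l2_inner I f g = (LINT u:I|lborel. f u * g u)"

definition ae_eq_on :: "real set \<Rightarrow> (real \<Rightarrow> real) \<Rightarrow> (real \<Rightarrow> real) \<Rightarrow> bool" where
  "ae_eq_on I f g \<longleftrightarrow> (AE u in lborel. u \<in> I \<longrightarrow> f u = g u)"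

definition kop :: "real set \<Rightarrow> (real \<Rightarrow> real \<Rightarrow> real) \<Rightarrow> (real \<Rightarrow> real) \<Rightarrow> (real \<Rightarrow> real)" where
  "kop I L g = (\<lambda>u. LINT v:I|lborel. L u v * g v)"

definition eigenpair :: "real set \<Rightarrow> (real \<Rightarrow> real \<Rightarrow> real) \<Rightarrow> real \<Rightarrow> (real \<Rightarrow> real) \<Rightarrow> bool" where
  "eigenpair I L \<theta> g \<longleftrightarrow> L2 I g \<and> \<not> ae_eq_on I g (\<lambda>_. 0) \<and> ae_eq_on I (kop I L g) (\<lambda>u. \<theta> * g u)"

definition in_span_L2 :: "real set \<Rightarrow> ('d::finite \<Rightarrow> real \<Rightarrow> real) \<Rightarrow> (real \<Rightarrow> real) \<Rightarrow> bool" where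
  "in_span_L2 I B g \<longleftrightarrow> (\<exists>c. ae_eq_on I g (\<lambda>u. \<Sum>j\<in>UNIV. c j * B j u))"

definition Nk :: "real set \<Rightarrow> (nat \<Rightarrow> real \<Rightarrow> real \<Rightarrow> real) \<Rightarrow> nat \<Rightarrow> real \<Rightarrow> real \<Rightarrow> real" where
  "Nk I M k u v = (LINT z:I|lborel. M k u z * M k v z)"

definition Kp :: "real set \<Rightarrow> (nat \<Rightarrow> real \<Rightarrow> real \<Rightarrow> real) \<Rightarrow> nat \<Rightarrow> real \<Rightarrow> real \<Rightarrow> real" where
  "Kp I M p u v = (\<Sum>k\<in>{1..p}. Nk I M k u v)"

definition kl_score :: "real set \<Rightarrow> (int \<Rightarrow> 'w \<Rightarrow> real \<Rightarrow> real) \<Rightarrow> (real \<Rightarrow> real)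
    \<Rightarrow> ('d \<Rightarrow> real \<Rightarrow> real) \<Rightarrow> int \<Rightarrow> 'd \<Rightarrow> 'w \<Rightarrow> real" where
  "kl_score I X \<mu> \<phi> t j \<omega> = (LINT u:I|lborel. (X t \<omega> u - \<mu> u) * \<phi> j u)"

text \<open>The operator with kernel L has exactly CARD('d) nonzero eigenvalues (counted with
  multiplicity), and the span of the corresponding eigenfunctions equals span{phi_j}:
  there are orthonormal eigenfunctions psi_j with nonzero eigenvalues theta_j, every
  eigenfunction for a nonzero eigenvalue lies in span{psi_j}, and span{psi_j} = span{phi_j}.\<close>
definition nonzero_eigenspace_is :: "real set \<Rightarrow> (real \<Rightarrow> real \<Rightarrow> real) \<Rightarrow> ('d::finite \<Rightarrow> real \<Rightarrow> real) \<Rightarrow> bool" where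
  "nonzero_eigenspace_is I L \<phi> \<longleftrightarrow>
     (\<exists>(\<theta>::'d \<Rightarrow> real) (\<psi>::'d \<Rightarrow> real \<Rightarrow> real).
        (\<forall>j. \<theta> j \<noteq> 0 \<and> eigenpair I L (\<theta> j) (\<psi> j)) \<and>
        (\<forall>i j. l2_inner I (\<psi> i) (\<psi> j) = (if i = j then 1 else 0)) \<and>
        (\<forall>\<theta>' g. \<theta>' \<noteq> 0 \<and> eigenpair I L \<theta>' g \<longrightarrow> in_span_L2 I \<psi> g) \<and>
        (\<forall>j. in_span_L2 I \<phi> (\<psi> j)) \<and>
        (\<forall>j. in_span_L2 I \<psi> (\<phi> j)))"

end

theory Submission
  imports Defs
begin

text \<open>
  The spectral form of M_0 forces every centred curve X_t - \<mu> into span{\<phi>_j} almost surely: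
  for g orthogonal to all \<phi>_j, E<X_t - \<mu>, g>^2 = <g, M_0 g> = 0. Writing
  X_t - \<mu> = \<Sum>_j \<xi>_tj \<phi>_j turns M_k into the finite-rank kernel \<Phi>(u)' \<Sigma>_k \<Phi>(v), so N_k has
  kernel \<Phi>(u)' \<Sigma>_k \<Sigma>_k' \<Phi>(v) and K has coefficient matrix sum_{k=1..p} \<Sigma>_k \<Sigma>_k'. These matrices
  are positive semidefinite, and positive definite once \<Sigma>_k0 has full rank. Diagonalising a
  positive definite coefficient matrix by an orthogonal matrix gives d orthonormal
  eigenfunctions in span{\<phi>_j} with nonzero eigenvalues; conversely an eigenfunction for a
  nonzero eigenvalue is a multiple of its image under the operator, which lies in span{\<phi>_j}.
\<close>

section \<open>Square-integrable functions on a set\<close>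

lemma abs_mult_le_sum_squares: "\<bar>x * y\<bar> \<le> x\<^sup>2 + y\<^sup>2" for x y :: real
proof -
  have "2 * \<bar>x\<bar> * \<bar>y\<bar> \<le> x\<^sup>2 + y\<^sup>2"
    using sum_squares_bound[of "\<bar>x\<bar>" "\<bar>y\<bar>"] by simp
  then have "\<bar>x\<bar> * \<bar>y\<bar> \<le> x\<^sup>2 + y\<^sup>2"
    using mult_nonneg_nonneg[OF abs_ge_zero abs_ge_zero, of x y] by linarith
  then show ?thesis
    by (simp add: abs_mult)
qed

lemma ennreal_abs_mult_mult_le:
  fixes a b c d :: real
  shows "ennreal \<bar>a * b * (c * d)\<bar> \<le> ennreal (a\<^sup>2) * ennreal (d\<^sup>2) + ennreal (b\<^sup>2) * ennreal (c\<^sup>2)"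
proof -
  have "\<bar>a * b * (c * d)\<bar> \<le> (a * d)\<^sup>2 + (b * c)\<^sup>2"
    using abs_mult_le_sum_squares[of "a * d" "b * c"] by (simp add: ac_simps)
  then have "ennreal \<bar>a * b * (c * d)\<bar> \<le> ennreal ((a * d)\<^sup>2 + (b * c)\<^sup>2)"
    by (rule ennreal_leI)
  also have "\<dots> = ennreal (a\<^sup>2) * ennreal (d\<^sup>2) + ennreal (b\<^sup>2) * ennreal (c\<^sup>2)"
    unfolding power_mult_distrib by (subst ennreal_plus) (auto simp: ennreal_mult)
  finally show ?thesis .
qed

lemma L2_measurable [measurable_dest]: "L2 I f \<Longrightarrow> f \<in> borel_measurable borel"
  by (simp add: L2_def)

lemma L2_set_integrable_mult:
  assumes I: "I \<in> sets lborel" and f: "L2 I f" and g: "L2 I g"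
  shows "set_integrable lborel I (\<lambda>u. f u * g u)"
proof (rule set_integrable_bound)
  show "set_integrable lborel I (\<lambda>u. (f u)\<^sup>2 + (g u)\<^sup>2)"
    using f g unfolding L2_def by (intro set_integral_add(1)) auto
  have [measurable]: "I \<in> sets borel" using I by simp
  show "set_borel_measurable lborel I (\<lambda>u. f u * g u)"
    using f g unfolding set_borel_measurable_def by measurable
  show "AE x in lborel. x \<in> I \<longrightarrow> norm (f x * g x) \<le> norm ((f x)\<^sup>2 + (g x)\<^sup>2)"
    using abs_mult_le_sum_squares by auto
qed

lemma L2_integrable_indicator_mult:
  "I \<in> sets lborel \<Longrightarrow> L2 I f \<Longrightarrow> L2 I g \<Longrightarrow> integrable lborel (\<lambda>u. indicator I u * (f u * g u))"
  using L2_set_integrable_mult unfolding set_integrable_def by simp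

lemma L2_nn_integral_square_finite:
  assumes "L2 I g"
  shows "(\<integral>\<^sup>+u. ennreal ((indicator I u * g u)\<^sup>2) \<partial>lborel) < \<infinity>"
proof -
  have "integrable lborel (\<lambda>u. indicator I u * (g u)\<^sup>2)"
    using assms unfolding L2_def set_integrable_def by simp
  then have "(\<integral>\<^sup>+u. ennreal (norm (indicator I u * (g u)\<^sup>2)) \<partial>lborel) < \<infinity>"
    by (simp add: integrable_iff_bounded)
  also have "(\<integral>\<^sup>+u. ennreal (norm (indicator I u * (g u)\<^sup>2)) \<partial>lborel)
      = (\<integral>\<^sup>+u. ennreal ((indicator I u * g u)\<^sup>2) \<partial>lborel)"
    by (intro nn_integral_cong) (simp add: indicator_def)
  finally show ?thesis .
qed

lemma L2_zero: "L2 I (\<lambda>u. 0)"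
  unfolding L2_def set_integrable_def by simp

lemma L2_add:
  assumes I: "I \<in> sets lborel" and f: "L2 I f" and g: "L2 I g"
  shows "L2 I (\<lambda>u. f u + g u)"
proof -
  have "set_integrable lborel I (\<lambda>u. (f u)\<^sup>2 + 2 * (f u * g u) + (g u)\<^sup>2)"
    using f g L2_set_integrable_mult[OF I f g] unfolding L2_def
    by (intro set_integral_add(1) set_integrable_mult_right) auto
  moreover have "(\<lambda>u. (f u)\<^sup>2 + 2 * (f u * g u) + (g u)\<^sup>2) = (\<lambda>u. (f u + g u)\<^sup>2)"
    by (simp add: power2_eq_square algebra_simps)
  ultimately show ?thesis
    using f g unfolding L2_def by auto
qed

lemma L2_cmult: "L2 I f \<Longrightarrow> L2 I (\<lambda>u. c * f u)"
  unfolding L2_def by (auto simp: power_mult_distrib intro: set_integrable_mult_right)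

lemma L2_diff: "I \<in> sets lborel \<Longrightarrow> L2 I f \<Longrightarrow> L2 I g \<Longrightarrow> L2 I (\<lambda>u. f u - g u)"
  using L2_add[of I f "\<lambda>u. (-1) * g u"] L2_cmult[of I g "-1"] by simp

lemma L2_sum:
  assumes I: "I \<in> sets lborel" and F: "\<And>j. j \<in> A \<Longrightarrow> L2 I (F j)"
  shows "L2 I (\<lambda>u. \<Sum>j\<in>A. F j u)"
  using F
proof (induction A rule: infinite_finite_induct)
  case (insert x A)
  then show ?case
    using L2_add[OF I, of "F x" "\<lambda>u. \<Sum>j\<in>A. F j u"] by simp
qed (simp_all add: L2_zero)

lemma L2_linear_combination:
  "I \<in> sets lborel \<Longrightarrow> (\<And>j. L2 I (F j)) \<Longrightarrow> L2 I (\<lambda>u. \<Sum>j\<in>A. c j * F j u)"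
  by (intro L2_sum L2_cmult)

lemma L2_indicator:
  assumes I: "I \<in> sets lborel" "emeasure lborel I < \<infinity>" and A: "A \<in> sets borel"
  shows "L2 I (indicator A)"
proof -
  have "emeasure lborel (I \<inter> A) \<le> emeasure lborel I"
    using I A by (intro emeasure_mono) auto
  then have "integrable lborel (indicator (I \<inter> A) :: real \<Rightarrow> real)"
    using I A by (intro integrable_real_indicator) auto
  moreover have "(\<lambda>x. indicator I x *\<^sub>R (indicator A x :: real)\<^sup>2) = indicator (I \<inter> A)"
    by (auto simp: indicator_def fun_eq_iff)
  ultimately show ?thesis
    using A unfolding L2_def set_integrable_def by simp
qed

lemma l2_inner_commute: "l2_inner I f g = l2_inner I g f"
  unfolding l2_inner_def by (simp add: mult.commute)

lemma l2_inner_sum_right: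
  assumes I: "I \<in> sets lborel" and f: "L2 I f" and F: "\<And>j. L2 I (F j)"
  shows "l2_inner I f (\<lambda>u. \<Sum>j\<in>A. c j * F j u) = (\<Sum>j\<in>A. c j * l2_inner I f (F j))"
proof -
  have "l2_inner I f (\<lambda>u. \<Sum>j\<in>A. c j * F j u)
      = (\<integral>u. (\<Sum>j\<in>A. c j * (indicator I u * (f u * F j u))) \<partial>lborel)"
    unfolding l2_inner_def set_lebesgue_integral_def
    by (rule Bochner_Integration.integral_cong) (auto simp: sum_distrib_left algebra_simps)
  also have "\<dots> = (\<Sum>j\<in>A. c j * (\<integral>u. indicator I u * (f u * F j u) \<partial>lborel))"
    using L2_integrable_indicator_mult[OF I f F] by (subst Bochner_Integration.integral_sum) auto
  finally show ?thesis
    unfolding l2_inner_def set_lebesgue_integral_def by simp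
qed

lemma l2_inner_sum_left:
  assumes "I \<in> sets lborel" "L2 I f" "\<And>j. L2 I (F j)"
  shows "l2_inner I (\<lambda>u. \<Sum>j\<in>A. c j * F j u) f = (\<Sum>j\<in>A. c j * l2_inner I (F j) f)"
  using l2_inner_sum_right[OF assms, where c=c and A=A] by (simp add: l2_inner_commute)

lemma l2_inner_diff_left:
  assumes I: "I \<in> sets lborel" and f: "L2 I f" and g: "L2 I g" and h: "L2 I h"
  shows "l2_inner I (\<lambda>u. f u - g u) h = l2_inner I f h - l2_inner I g h"
  unfolding l2_inner_def left_diff_distrib
  using L2_set_integrable_mult[OF I f h] L2_set_integrable_mult[OF I g h] by (rule set_integral_diff(2))

lemma l2_inner_orthonormal_expansion:
  fixes \<phi> :: "'d::finite \<Rightarrow> real \<Rightarrow> real"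
  assumes I: "I \<in> sets lborel" and phi_L2: "\<And>j. L2 I (\<phi> j)"
    and phi_orth: "\<And>i j. l2_inner I (\<phi> i) (\<phi> j) = (if i = j then 1 else 0)"
  shows "l2_inner I (\<phi> j) (\<lambda>u. \<Sum>i\<in>UNIV. c i * \<phi> i u) = c j"
  using l2_inner_sum_right[OF I phi_L2 phi_L2, where c=c and A=UNIV]
  by (simp add: phi_orth if_distrib cong: if_cong)

lemma l2_inner_ae_zero_left: "ae_eq_on I f (\<lambda>_. 0) \<Longrightarrow> l2_inner I f g = 0"
  unfolding ae_eq_on_def l2_inner_def set_lebesgue_integral_def
  by (rule integral_eq_zero_AE) (auto elim!: eventually_mono)

lemma in_span_L2_trans:
  fixes \<phi> :: "'d::finite \<Rightarrow> real \<Rightarrow> real" and \<psi> :: "'e::finite \<Rightarrow> real \<Rightarrow> real"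
  assumes \<phi>: "\<And>i. in_span_L2 I \<psi> (\<phi> i)" and g: "in_span_L2 I \<phi> g"
  shows "in_span_L2 I \<psi> g"
proof -
  obtain c where c: "\<And>i. ae_eq_on I (\<phi> i) (\<lambda>u. \<Sum>j\<in>UNIV. c i j * \<psi> j u)"
    using \<phi> unfolding in_span_L2_def by metis
  obtain a where a: "ae_eq_on I g (\<lambda>u. \<Sum>i\<in>UNIV. a i * \<phi> i u)"
    using g unfolding in_span_L2_def by blast
  have "AE u in lborel. \<forall>i\<in>UNIV. u \<in> I \<longrightarrow> \<phi> i u = (\<Sum>j\<in>UNIV. c i j * \<psi> j u)"
    using c unfolding ae_eq_on_def by (intro eventually_ball_finite) auto
  with a have "ae_eq_on I g (\<lambda>u. \<Sum>j\<in>UNIV. (\<Sum>i\<in>UNIV. a i * c i j) * \<psi> j u)"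
    unfolding ae_eq_on_def
    by eventually_elim
       (auto simp: sum_distrib_left sum_distrib_right mult.assoc intro: sum.swap)
  then show ?thesis
    unfolding in_span_L2_def by (rule exI[where x="\<lambda>j. \<Sum>i\<in>UNIV. a i * c i j"])
qed

section \<open>Symmetric and Gram matrices\<close>

lemma quadratic_nonpos_imp_linear_coeff_zero:
  fixes b c :: real
  assumes "\<And>t. 2 * t * b + t\<^sup>2 * c \<le> 0"
  shows "b = 0"
proof (rule ccontr)
  assume "b \<noteq> 0"
  define s where "s = 1 / (\<bar>c\<bar> + 1)"
  have s: "s > 0" "s * \<bar>c\<bar> < 1"
    unfolding s_def by (auto simp: field_simps)
  have "s * (2 + s * c) > 0"
    using s abs_le_D2[of c] mult_left_mono[of "-c" "\<bar>c\<bar>" s] by (intro mult_pos_pos) auto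
  moreover have "b\<^sup>2 * (s * (2 + s * c)) \<le> 0"
    using assms[of "s * b"] by (simp add: power2_eq_square algebra_simps)
  moreover have "b\<^sup>2 > 0"
    using \<open>b \<noteq> 0\<close> by simp
  ultimately show False
    by (metis mult_pos_pos not_le)
qed

lemma symmetric_matrix_inner_commute:
  fixes A :: "real^'n^'n"
  assumes "transpose A = A"
  shows "u \<bullet> (A *v v) = v \<bullet> (A *v u)"
  by (metis assms dot_lmul_matrix inner_commute vector_transpose_matrix)

text \<open>Moving from a maximiser x of the Rayleigh quotient in a direction y orthogonal to x
  cannot increase the quotient to first order.\<close>

lemma Rayleigh_maximiser_orthogonal:
  fixes A :: "real^'n^'n"
  assumes sym: "transpose A = A" and S: "subspace S"
    and x: "x \<in> S" "x \<bullet> x = 1"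
    and max: "\<And>z. z \<in> S \<Longrightarrow> norm z = 1 \<Longrightarrow> z \<bullet> (A *v z) \<le> x \<bullet> (A *v x)"
    and y: "y \<in> S" "y \<bullet> x = 0"
  shows "y \<bullet> (A *v x) = 0"
proof (rule quadratic_nonpos_imp_linear_coeff_zero)
  fix t :: real
  let ?q = "x \<bullet> (A *v x)"
  let ?z = "x + t *\<^sub>R y"
  have quot: "?z \<bullet> (A *v ?z) = ?q + 2 * t * (y \<bullet> (A *v x)) + t\<^sup>2 * (y \<bullet> (A *v y))"
    using symmetric_matrix_inner_commute[OF sym, of x y]
    by (simp add: matrix_vector_right_distrib algebra_simps power2_eq_square)
  have norm: "?z \<bullet> ?z = 1 + t\<^sup>2 * (y \<bullet> y)"
    using x y by (simp add: inner_add_left inner_add_right inner_commute power2_eq_square)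
  have "?z \<bullet> (A *v ?z) \<le> ?q * (?z \<bullet> ?z)"
  proof (cases "?z = 0")
    case False
    have "?z \<in> S"
      using x y S by (simp add: subspace_add subspace_scale)
    then have "((1 / norm ?z) *\<^sub>R ?z) \<bullet> (A *v ((1 / norm ?z) *\<^sub>R ?z)) \<le> ?q"
      using False S by (intro max) (auto simp: subspace_scale)
    then have "(1 / norm ?z)\<^sup>2 * (?z \<bullet> (A *v ?z)) \<le> ?q"
      by (simp add: power2_eq_square algebra_simps)
    then show ?thesis
      using False by (simp add: field_simps power2_norm_eq_inner)
  qed simp
  then have "?q + 2 * t * (y \<bullet> (A *v x)) + t\<^sup>2 * (y \<bullet> (A *v y)) \<le> ?q * (1 + t\<^sup>2 * (y \<bullet> y))"
    unfolding quot norm .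
  then show "2 * t * (y \<bullet> (A *v x)) + t\<^sup>2 * (y \<bullet> (A *v y) - ?q * (y \<bullet> y)) \<le> 0"
    by (simp add: algebra_simps)
qed

lemma symmetric_matrix_invariant_subspace_eigenvector:
  fixes A :: "real^'n^'n"
  assumes sym: "transpose A = A" and S: "subspace S" and inv: "\<And>y. y \<in> S \<Longrightarrow> A *v y \<in> S"
    and x0: "x0 \<in> S" "x0 \<noteq> 0"
  obtains x where "x \<in> S" "norm x = 1" "A *v x = (x \<bullet> (A *v x)) *\<^sub>R x"
proof -
  let ?T = "S \<inter> sphere 0 1"
  have "compact ?T"
    using compact_Int_closed[OF compact_sphere closed_subspace[OF S]] by (simp add: Int_commute)
  moreover have "(1 / norm x0) *\<^sub>R x0 \<in> ?T"
    using x0 S by (auto simp: subspace_scale)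
  moreover have "continuous_on ?T (\<lambda>y. y \<bullet> (A *v y))"
    by (intro continuous_intros)
  ultimately obtain x where x: "x \<in> ?T" and max: "\<And>y. y \<in> ?T \<Longrightarrow> y \<bullet> (A *v y) \<le> x \<bullet> (A *v x)"
    using continuous_attains_sup[of ?T "\<lambda>y. y \<bullet> (A *v y)"] by blast
  have xS: "x \<in> S" and xx: "x \<bullet> x = 1"
    using x by (auto simp: norm_eq_1)
  define v where "v = A *v x - (x \<bullet> (A *v x)) *\<^sub>R x"
  have "v \<in> S"
    unfolding v_def using xS inv S by (simp add: subspace_diff subspace_scale)
  moreover have vx: "v \<bullet> x = 0"
    unfolding v_def using xx by (simp add: inner_diff_left inner_commute[of x "A *v x"])
  ultimately have "v \<bullet> (A *v x) = 0"
    using max by (intro Rayleigh_maximiser_orthogonal[OF sym S xS xx]) auto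
  then have "v \<bullet> v = 0"
    using vx unfolding v_def by (simp add: inner_diff_right inner_diff_left)
  then show ?thesis
    using that xS x unfolding v_def by simp
qed

lemma symmetric_matrix_orthogonal_complement_invariant:
  fixes A :: "real^'n^'n"
  assumes sym: "transpose A = A" and ev: "A *v x = c *\<^sub>R x"
    and inv: "\<forall>y\<in>S. A *v y \<in> S"
  shows "\<forall>y\<in>{y \<in> S. x \<bullet> y = 0}. A *v y \<in> {y \<in> S. x \<bullet> y = 0}"
proof
  fix y
  assume "y \<in> {y \<in> S. x \<bullet> y = 0}"
  then have "y \<in> S" "x \<bullet> y = 0"
    by auto
  moreover have "x \<bullet> (A *v y) = y \<bullet> (A *v x)"
    by (rule symmetric_matrix_inner_commute[OF sym])
  ultimately show "A *v y \<in> {y \<in> S. x \<bullet> y = 0}"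
    using inv ev by (simp add: inner_commute)
qed

lemma symmetric_matrix_invariant_subspace_eigenbasis:
  fixes A :: "real^'n^'n"
  assumes sym: "transpose A = A"
  shows "subspace S \<Longrightarrow> (\<forall>y\<in>S. A *v y \<in> S) \<Longrightarrow> dim S = n \<Longrightarrow>
     \<exists>B. B \<subseteq> S \<and> card B = n \<and> finite B \<and> pairwise orthogonal B \<and>
         (\<forall>x\<in>B. norm x = 1 \<and> (\<exists>c. A *v x = c *\<^sub>R x))"
proof (induction n arbitrary: S)
  case 0
  then show ?case
    by (intro exI[of _ "{}"]) auto
next
  case (Suc n)
  have "S \<noteq> {0}"
    using Suc.prems(3) by auto
  moreover have "0 \<in> S"
    using Suc.prems(1) by (simp add: subspace_0)
  ultimately obtain x0 where x0: "x0 \<in> S" "x0 \<noteq> 0"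
    by blast
  obtain x where xS: "x \<in> S" and nx: "norm x = 1" and ev: "A *v x = (x \<bullet> (A *v x)) *\<^sub>R x"
    using symmetric_matrix_invariant_subspace_eigenvector[OF sym Suc.prems(1) _ x0] Suc.prems(2)
    by blast
  define S' where "S' = {y \<in> S. \<forall>z \<in> span {x}. orthogonal z y}"
  have S'_eq: "S' = {y \<in> S. x \<bullet> y = 0}"
    unfolding S'_def by (auto simp: span_singleton orthogonal_def)
  have "subspace S'"
    unfolding S'_eq using Suc.prems(1) by (auto simp: subspace_def inner_add_right)
  moreover have "\<forall>y\<in>S'. A *v y \<in> S'"
    unfolding S'_eq by (rule symmetric_matrix_orthogonal_complement_invariant[OF sym ev Suc.prems(2)])
  moreover have "dim S' + dim (span {x}) = dim S"
    unfolding S'_def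
    by (rule dim_subspace_orthogonal_to_vectors) (use Suc.prems(1) xS in \<open>auto simp: span_minimal\<close>)
  then have "dim S' = n"
    using Suc.prems(3) nx by (cases "x = 0") (simp_all add: dim_insert)
  ultimately obtain B where B: "B \<subseteq> S'" "card B = n" "finite B" "pairwise orthogonal B"
      "\<forall>x\<in>B. norm x = 1 \<and> (\<exists>c. A *v x = c *\<^sub>R x)"
    using Suc.IH by blast
  have "x \<notin> B"
    using B(1) nx unfolding S'_eq by auto
  show ?case
  proof (intro exI[of _ "insert x B"] conjI)
    show "insert x B \<subseteq> S" "card (insert x B) = Suc n" "finite (insert x B)"
      using B xS \<open>x \<notin> B\<close> unfolding S'_eq by auto
    show "pairwise orthogonal (insert x B)"
      using B(1,4) unfolding pairwise_insert S'_eq by (auto simp: orthogonal_def inner_commute)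
    show "\<forall>y\<in>insert x B. norm y = 1 \<and> (\<exists>c. A *v y = c *\<^sub>R y)"
      using B(5) nx ev by blast
  qed
qed

lemma symmetric_matrix_orthogonal_diagonalization:
  fixes A :: "real^'n^'n"
  assumes sym: "transpose A = A"
  obtains W :: "real^'n^'n" and \<theta> :: "'n \<Rightarrow> real"
  where "orthogonal_matrix W" "\<And>j. A *v column j W = \<theta> j *\<^sub>R column j W"
proof -
  obtain B where B: "card B = CARD('n)" "finite B" "pairwise orthogonal B"
         "\<forall>x\<in>B. norm x = 1 \<and> (\<exists>c. A *v x = c *\<^sub>R x)"
    using symmetric_matrix_invariant_subspace_eigenbasis[OF sym, of UNIV "CARD('n)"]
    by (auto simp: dim_UNIV)
  obtain f where f: "bij_betw f (UNIV::'n set) B"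
    using bij_betw_iff_card[of "UNIV::'n set" B] B by auto
  define W :: "real^'n^'n" where "W = (\<chi> i j. f j $ i)"
  have col: "column j W = f j" for j
    unfolding W_def column_def by (simp add: vec_eq_iff)
  have fB: "f j \<in> B" for j
    using f by (auto simp: bij_betw_def)
  have "orthogonal_matrix W"
    unfolding orthogonal_matrix_orthonormal_columns col
  proof (intro conjI allI impI)
    show "norm (f i) = 1" for i
      using B(4) fB by auto
    show "orthogonal (f i) (f j)" if "i \<noteq> j" for i j
    proof -
      have "f i \<noteq> f j"
        using f that unfolding bij_betw_def inj_on_def by blast
      then show ?thesis
        using B(3) fB[of i] fB[of j] unfolding pairwise_def by blast
    qed
  qed
  moreover have "\<forall>j. \<exists>c. A *v f j = c *\<^sub>R f j"
    using B(4) fB by blast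
  then obtain \<theta> where "\<And>j. A *v f j = \<theta> j *\<^sub>R f j"
    by metis
  ultimately show ?thesis
    using that[of W \<theta>] by (simp add: col)
qed

lemma orthogonal_matrix_orthonormal_entries:
  fixes W :: "real^'n^'n"
  assumes "orthogonal_matrix W"
  shows "(\<Sum>i\<in>UNIV. W$i$j * W$i$k) = (if j = k then 1 else 0)"
    and "(\<Sum>j\<in>UNIV. W$i$j * W$m$j) = (if i = m then 1 else 0)"
proof -
  have "(transpose W ** W)$j$k = mat 1 $j$k" "(W ** transpose W)$i$m = mat 1 $i$m"
    using assms by (auto simp: orthogonal_matrix_def)
  then show "(\<Sum>i\<in>UNIV. W$i$j * W$i$k) = (if j = k then 1 else 0)"
    and "(\<Sum>j\<in>UNIV. W$i$j * W$m$j) = (if i = m then 1 else 0)"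
    by (auto simp: matrix_matrix_mult_def transpose_def mat_def)
qed

lemma transpose_sum: "transpose (\<Sum>k\<in>A. C k) = (\<Sum>k\<in>A. transpose (C k))"
  by (simp add: vec_eq_iff transpose_def)

lemma sum_matrix_vector_mult: "(\<Sum>k\<in>A. C k) *v x = (\<Sum>k\<in>A. C k *v x)"
  by (simp add: vec_eq_iff matrix_vector_mult_def sum_distrib_right sum.swap[of _ A])

lemma inner_mult_transpose_self: "x \<bullet> ((S ** transpose S) *v x) = (norm (transpose S *v x))\<^sup>2"
  for S :: "real^'n^'m"
  by (metis dot_lmul_matrix matrix_vector_mul_assoc power2_norm_eq_inner transpose_transpose
      vector_transpose_matrix)

lemma mult_transpose_self_pos_def:
  fixes S :: "real^'n^'n"
  assumes "rank S = CARD('n)" and "x \<noteq> 0"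
  shows "x \<bullet> ((S ** transpose S) *v x) > 0"
proof -
  have "inj ((*v) (transpose S))"
    using assms(1) by (simp add: full_rank_injective[symmetric] rank_transpose)
  then have "transpose S *v x \<noteq> 0"
    using assms(2) by (metis injD matrix_vector_mult_0_right)
  then show ?thesis
    by (simp add: inner_mult_transpose_self)
qed

section \<open>Integral operators with finite-rank kernels\<close>

text \<open>Measurability of the sections lets kop be evaluated term by term.\<close>

definition finite_rank_kernel ::
    "real set \<Rightarrow> (real \<Rightarrow> real \<Rightarrow> real) \<Rightarrow> ('d::finite \<Rightarrow> real \<Rightarrow> real) \<Rightarrow> real^'d^'d \<Rightarrow> bool" where
  "finite_rank_kernel I L \<phi> C \<longleftrightarrow>
     (AE u in lborel. u \<in> I \<longrightarrow> (\<lambda>v. indicator I v * L u v) \<in> borel_measurable lborel \<and>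
        (AE v in lborel. v \<in> I \<longrightarrow> L u v = (\<Sum>i\<in>UNIV. \<Sum>l\<in>UNIV. \<phi> i u * C$i$l * \<phi> l v)))"

lemma kop_finite_rank_kernel:
  fixes \<phi> :: "'d::finite \<Rightarrow> real \<Rightarrow> real"
  assumes I: "I \<in> sets lborel" and phi_L2: "\<And>j. L2 I (\<phi> j)"
    and L: "finite_rank_kernel I L \<phi> C" and g: "L2 I g"
  shows "ae_eq_on I (kop I L g) (\<lambda>u. \<Sum>i\<in>UNIV. \<Sum>l\<in>UNIV. \<phi> i u * C$i$l * l2_inner I (\<phi> l) g)"
  unfolding ae_eq_on_def using L[unfolded finite_rank_kernel_def]
proof eventually_elim
  case (elim u)
  show ?case
  proof
    assume "u \<in> I"
    with elim have mL: "(\<lambda>v. indicator I v * L u v) \<in> borel_measurable lborel"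
      and ae: "AE v in lborel. v \<in> I \<longrightarrow> L u v = (\<Sum>i\<in>UNIV. \<Sum>l\<in>UNIV. \<phi> i u * C$i$l * \<phi> l v)"
      by auto
    have int: "integrable lborel (\<lambda>v. indicator I v * (\<phi> l v * g v))" for l
      using L2_integrable_indicator_mult[OF I phi_L2 g] .
    have "kop I L g u = (\<integral>v. (indicator I v * L u v) * g v \<partial>lborel)"
      unfolding kop_def set_lebesgue_integral_def by (simp add: mult.assoc)
    also have "\<dots> = (\<integral>v. (\<Sum>i\<in>UNIV. \<Sum>l\<in>UNIV. (\<phi> i u * C$i$l) * (indicator I v * (\<phi> l v * g v))) \<partial>lborel)"
    proof (rule integral_cong_AE)
      show "(\<lambda>v. indicator I v * L u v * g v) \<in> borel_measurable lborel"
        using mL g by measurable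
      show "(\<lambda>v. \<Sum>i\<in>UNIV. \<Sum>l\<in>UNIV. (\<phi> i u * C$i$l) * (indicator I v * (\<phi> l v * g v))) \<in> borel_measurable lborel"
        using int by measurable
      show "AE v in lborel. indicator I v * L u v * g v
          = (\<Sum>i\<in>UNIV. \<Sum>l\<in>UNIV. (\<phi> i u * C$i$l) * (indicator I v * (\<phi> l v * g v)))"
        using ae by eventually_elim (auto simp: indicator_def sum_distrib_left sum_distrib_right algebra_simps)
    qed
    also have "\<dots> = (\<Sum>i\<in>UNIV. \<Sum>l\<in>UNIV. (\<phi> i u * C$i$l) * (\<integral>v. indicator I v * (\<phi> l v * g v) \<partial>lborel))"
      using int by (simp add: Bochner_Integration.integral_sum integrable_sum)
    finally show "kop I L g u = (\<Sum>i\<in>UNIV. \<Sum>l\<in>UNIV. \<phi> i u * C$i$l * l2_inner I (\<phi> l) g)"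
      unfolding l2_inner_def set_lebesgue_integral_def by simp
  qed
qed

lemma eigenpair_finite_rank_kernel:
  fixes \<phi> :: "'d::finite \<Rightarrow> real \<Rightarrow> real"
  assumes I: "I \<in> sets lborel" and phi_L2: "\<And>j. L2 I (\<phi> j)"
    and phi_orth: "\<And>i j. l2_inner I (\<phi> i) (\<phi> j) = (if i = j then 1 else 0)"
    and L: "finite_rank_kernel I L \<phi> C"
    and w: "C *v w = \<theta> *\<^sub>R w" "w \<noteq> 0"
  shows "eigenpair I L \<theta> (\<lambda>u. \<Sum>i\<in>UNIV. w$i * \<phi> i u)"
  unfolding eigenpair_def
proof (intro conjI)
  let ?\<psi> = "\<lambda>u. \<Sum>i\<in>UNIV. w$i * \<phi> i u"
  have coeff: "l2_inner I (\<phi> l) ?\<psi> = w$l" for l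
    by (rule l2_inner_orthonormal_expansion[OF I phi_L2 phi_orth])
  show \<psi>: "L2 I ?\<psi>"
    by (rule L2_linear_combination[OF I phi_L2])
  have "l2_inner I ?\<psi> ?\<psi> = w \<bullet> w"
    using l2_inner_sum_left[OF I \<psi> phi_L2, where c="\<lambda>i. w$i" and A=UNIV]
    by (simp add: coeff inner_vec_def)
  then show "\<not> ae_eq_on I ?\<psi> (\<lambda>_. 0)"
    using w(2) l2_inner_ae_zero_left by fastforce
  have "(\<Sum>i\<in>UNIV. \<Sum>l\<in>UNIV. \<phi> i u * C$i$l * l2_inner I (\<phi> l) ?\<psi>) = \<theta> * ?\<psi> u" for u
  proof -
    have "(\<Sum>l\<in>UNIV. C$i$l * w$l) = \<theta> * w$i" for i
      using arg_cong[OF w(1), of "\<lambda>x. x $ i"] by (simp add: matrix_vector_mult_def)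
    then show ?thesis
      by (simp add: coeff mult.assoc flip: sum_distrib_left) (simp add: sum_distrib_left algebra_simps)
  qed
  then show "ae_eq_on I (kop I L ?\<psi>) (\<lambda>u. \<theta> * ?\<psi> u)"
    using kop_finite_rank_kernel[OF I phi_L2 L \<psi>] by simp
qed

lemma eigenfunction_in_span_finite_rank_kernel:
  fixes \<phi> :: "'d::finite \<Rightarrow> real \<Rightarrow> real"
  assumes I: "I \<in> sets lborel" and phi_L2: "\<And>j. L2 I (\<phi> j)"
    and L: "finite_rank_kernel I L \<phi> C" and "\<theta> \<noteq> 0" and g: "eigenpair I L \<theta> g"
  shows "in_span_L2 I \<phi> g"
proof -
  define a where "a i = (\<Sum>l\<in>UNIV. C$i$l * l2_inner I (\<phi> l) g) / \<theta>" for i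
  have "L2 I g" and eig: "ae_eq_on I (kop I L g) (\<lambda>u. \<theta> * g u)"
    using g unfolding eigenpair_def by auto
  have "ae_eq_on I g (\<lambda>u. \<Sum>i\<in>UNIV. a i * \<phi> i u)"
    using kop_finite_rank_kernel[OF I phi_L2 L \<open>L2 I g\<close>] eig unfolding ae_eq_on_def
  proof eventually_elim
    case (elim u)
    show ?case
    proof
      assume "u \<in> I"
      with elim have "g u = (\<Sum>i\<in>UNIV. \<Sum>l\<in>UNIV. \<phi> i u * C$i$l * l2_inner I (\<phi> l) g) / \<theta>"
        using \<open>\<theta> \<noteq> 0\<close> by (simp add: field_simps)
      then show "g u = (\<Sum>i\<in>UNIV. a i * \<phi> i u)"
        unfolding a_def by (simp add: sum_divide_distrib sum_distrib_left sum_distrib_right algebra_simps)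
    qed
  qed
  then show ?thesis
    unfolding in_span_L2_def by (rule exI[where x=a])
qed

lemma l2_inner_orthogonal_rotation:
  fixes \<phi> :: "'d::finite \<Rightarrow> real \<Rightarrow> real" and W :: "real^'d^'d"
  assumes I: "I \<in> sets lborel" and phi_L2: "\<And>j. L2 I (\<phi> j)"
    and phi_orth: "\<And>i j. l2_inner I (\<phi> i) (\<phi> j) = (if i = j then 1 else 0)"
    and W: "orthogonal_matrix W"
  shows "l2_inner I (\<lambda>u. \<Sum>l\<in>UNIV. W$l$i * \<phi> l u) (\<lambda>u. \<Sum>l\<in>UNIV. W$l$j * \<phi> l u)
      = (if i = j then 1 else 0)"
proof -
  have "l2_inner I (\<lambda>u. \<Sum>l\<in>UNIV. W$l$i * \<phi> l u) (\<lambda>u. \<Sum>l\<in>UNIV. W$l$j * \<phi> l u)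
      = (\<Sum>l\<in>UNIV. W$l$i * l2_inner I (\<phi> l) (\<lambda>u. \<Sum>l\<in>UNIV. W$l$j * \<phi> l u))"
    by (rule l2_inner_sum_left[OF I L2_linear_combination[OF I phi_L2] phi_L2])
  also have "\<dots> = (\<Sum>l\<in>UNIV. W$l$i * W$l$j)"
    by (simp add: l2_inner_orthonormal_expansion[OF I phi_L2 phi_orth])
  finally show ?thesis
    using orthogonal_matrix_orthonormal_entries(1)[OF W] by simp
qed

lemma in_span_L2_orthogonal_rotation:
  fixes \<phi> :: "'d::finite \<Rightarrow> real \<Rightarrow> real" and W :: "real^'d^'d"
  assumes W: "orthogonal_matrix W"
  shows "in_span_L2 I (\<lambda>j u. \<Sum>l\<in>UNIV. W$l$j * \<phi> l u) (\<phi> i)"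
proof -
  have "(\<Sum>j\<in>UNIV. W$i$j * (\<Sum>l\<in>UNIV. W$l$j * \<phi> l u)) = (\<Sum>l\<in>UNIV. (\<Sum>j\<in>UNIV. W$i$j * W$l$j) * \<phi> l u)"
    for u
    unfolding sum_distrib_left sum_distrib_right by (subst sum.swap) (simp add: mult.assoc)
  also have "\<dots> u = \<phi> i u" for u
    by (simp only: orthogonal_matrix_orthonormal_entries(2)[OF W]) (simp add: mult_if_delta)
  finally show ?thesis
    unfolding in_span_L2_def ae_eq_on_def by (intro exI[of _ "\<lambda>j. W$i$j"]) simp
qed

text \<open>Diagonalise C = W diag(\<theta>) W': the columns of W give the coefficients of orthonormal
  eigenfunctions, and since W is orthogonal they span the same space as the \<phi>_j.\<close>

lemma nonzero_eigenspace_is_finite_rank_kernel: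
  fixes \<phi> :: "'d::finite \<Rightarrow> real \<Rightarrow> real" and C :: "real^'d^'d"
  assumes I: "I \<in> sets lborel" and phi_L2: "\<And>j. L2 I (\<phi> j)"
    and phi_orth: "\<And>i j. l2_inner I (\<phi> i) (\<phi> j) = (if i = j then 1 else 0)"
    and sym: "transpose C = C" and pos_def: "\<And>x. x \<noteq> 0 \<Longrightarrow> x \<bullet> (C *v x) > 0"
    and L: "finite_rank_kernel I L \<phi> C"
  shows "nonzero_eigenspace_is I L \<phi>"
proof -
  obtain W :: "real^'d^'d" and \<theta> where W: "orthogonal_matrix W"
    and ev: "\<And>j. C *v column j W = \<theta> j *\<^sub>R column j W"
    using symmetric_matrix_orthogonal_diagonalization[OF sym] by blast
  define \<psi> where "\<psi> j = (\<lambda>u. \<Sum>l\<in>UNIV. W$l$j * \<phi> l u)" for j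
  have unit: "column j W \<bullet> column j W = 1" for j
    using W by (simp add: orthogonal_matrix_orthonormal_columns norm_eq_1)
  then have nonzero: "column j W \<noteq> 0" for j
    by (metis inner_zero_left zero_neq_one)
  then have eig: "eigenpair I L (\<theta> j) (\<psi> j)" for j
    using eigenpair_finite_rank_kernel[OF I phi_L2 phi_orth L ev] unfolding \<psi>_def
    by (simp add: column_def)
  have "\<theta> j = column j W \<bullet> (C *v column j W)" for j
    using unit by (simp add: ev)
  then have \<theta>: "\<theta> j \<noteq> 0" for j
    using pos_def nonzero by (metis less_irrefl)
  have \<phi>_in_span: "in_span_L2 I \<psi> (\<phi> i)" for i
    unfolding \<psi>_def by (rule in_span_L2_orthogonal_rotation[OF W])
  show ?thesis
    unfolding nonzero_eigenspace_is_def
  proof (intro exI[of _ \<theta>] exI[of _ \<psi>] conjI allI impI)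
    show "\<theta> j \<noteq> 0" "eigenpair I L (\<theta> j) (\<psi> j)" for j
      using \<theta> eig by auto
    show "l2_inner I (\<psi> i) (\<psi> j) = (if i = j then 1 else 0)" for i j
      unfolding \<psi>_def by (rule l2_inner_orthogonal_rotation[OF I phi_L2 phi_orth W])
    show "in_span_L2 I \<phi> (\<psi> j)" for j
      unfolding in_span_L2_def ae_eq_on_def \<psi>_def by (intro exI[of _ "\<lambda>i. W$i$j"]) simp
    show "in_span_L2 I \<psi> g" if "\<theta>' \<noteq> 0 \<and> eigenpair I L \<theta>' g" for \<theta>' g
      using in_span_L2_trans[OF \<phi>_in_span eigenfunction_in_span_finite_rank_kernel[OF I phi_L2 L]] that
      by blast
  qed (rule \<phi>_in_span)
qed

lemma finite_rank_kernel_sum: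
  assumes "finite A" and L: "\<And>k. k \<in> A \<Longrightarrow> finite_rank_kernel I (L k) \<phi> (C k)"
  shows "finite_rank_kernel I (\<lambda>u v. \<Sum>k\<in>A. L k u v) \<phi> (\<Sum>k\<in>A. C k)"
proof -
  have "AE u in lborel. \<forall>k\<in>A. u \<in> I \<longrightarrow> (\<lambda>v. indicator I v * L k u v) \<in> borel_measurable lborel \<and>
      (AE v in lborel. v \<in> I \<longrightarrow> L k u v = (\<Sum>i\<in>UNIV. \<Sum>l\<in>UNIV. \<phi> i u * C k $ i $ l * \<phi> l v))"
    using L unfolding finite_rank_kernel_def by (intro eventually_ball_finite \<open>finite A\<close>) auto
  then show ?thesis
    unfolding finite_rank_kernel_def
  proof eventually_elim
    case (elim u)
    show ?case
    proof (intro impI conjI)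
      assume "u \<in> I"
      have "(\<lambda>v. indicator I v * (\<Sum>k\<in>A. L k u v)) = (\<lambda>v. \<Sum>k\<in>A. indicator I v * L k u v)"
        by (simp add: sum_distrib_left)
      then show "(\<lambda>v. indicator I v * (\<Sum>k\<in>A. L k u v)) \<in> borel_measurable lborel"
        using elim \<open>u \<in> I\<close> by (auto intro!: borel_measurable_sum)
      have "AE v in lborel. \<forall>k\<in>A. v \<in> I \<longrightarrow> L k u v = (\<Sum>i\<in>UNIV. \<Sum>l\<in>UNIV. \<phi> i u * C k $ i $ l * \<phi> l v)"
        using elim \<open>u \<in> I\<close> by (intro eventually_ball_finite \<open>finite A\<close>) auto
      then show "AE v in lborel. v \<in> I \<longrightarrow>
          (\<Sum>k\<in>A. L k u v) = (\<Sum>i\<in>UNIV. \<Sum>l\<in>UNIV. \<phi> i u * (\<Sum>k\<in>A. C k) $ i $ l * \<phi> l v)"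
      proof eventually_elim
        case (elim v)
        show ?case
        proof
          assume "v \<in> I"
          then have "(\<Sum>k\<in>A. L k u v) = (\<Sum>k\<in>A. \<Sum>i\<in>UNIV. \<Sum>l\<in>UNIV. \<phi> i u * C k $ i $ l * \<phi> l v)"
            using elim by simp
          also have "\<dots> = (\<Sum>i\<in>UNIV. \<Sum>l\<in>UNIV. \<Sum>k\<in>A. \<phi> i u * C k $ i $ l * \<phi> l v)"
            by (subst sum.swap) (intro sum.cong refl sum.swap)
          finally show "(\<Sum>k\<in>A. L k u v) = (\<Sum>i\<in>UNIV. \<Sum>l\<in>UNIV. \<phi> i u * (\<Sum>k\<in>A. C k) $ i $ l * \<phi> l v)"
            by (simp add: sum_distrib_left sum_distrib_right)
        qed
      qed
    qed
  qed
qed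

text \<open>By orthonormality, N_k(u,v) is the Euclidean inner product of the coefficient vectors
  S' \<Phi>(u) and S' \<Phi>(v) of the sections M_k(u,.) and M_k(v,.).\<close>

lemma Nk_eq_expansion:
  fixes \<phi> :: "'d::finite \<Rightarrow> real \<Rightarrow> real" and S :: "real^'d^'d"
  assumes I: "I \<in> sets lborel" and phi_L2: "\<And>j. L2 I (\<phi> j)"
    and phi_orth: "\<And>i j. l2_inner I (\<phi> i) (\<phi> j) = (if i = j then 1 else 0)"
    and u: "(\<lambda>z. indicator I z * M k u z) \<in> borel_measurable lborel"
      "AE z in lborel. z \<in> I \<longrightarrow> M k u z = (\<Sum>i\<in>UNIV. \<Sum>j\<in>UNIV. \<phi> i u * S$i$j * \<phi> j z)"
    and v: "(\<lambda>z. indicator I z * M k v z) \<in> borel_measurable lborel"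
      "AE z in lborel. z \<in> I \<longrightarrow> M k v z = (\<Sum>i\<in>UNIV. \<Sum>j\<in>UNIV. \<phi> i v * S$i$j * \<phi> j z)"
  shows "Nk I M k u v = (\<Sum>i\<in>UNIV. \<Sum>l\<in>UNIV. \<phi> i u * (S ** transpose S)$i$l * \<phi> l v)"
proof -
  define a where "a j = (\<Sum>i\<in>UNIV. \<phi> i u * S$i$j)" for j
  define b where "b j = (\<Sum>i\<in>UNIV. \<phi> i v * S$i$j)" for j
  have expand: "(\<Sum>i\<in>UNIV. \<Sum>j\<in>UNIV. \<phi> i w * S$i$j * \<phi> j z) = (\<Sum>j\<in>UNIV. (\<Sum>i\<in>UNIV. \<phi> i w * S$i$j) * \<phi> j z)"
    for w z
    by (subst sum.swap) (simp add: sum_distrib_right)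
  have "Nk I M k u v = (\<integral>z. (indicator I z * M k u z) * (indicator I z * M k v z) \<partial>lborel)"
    unfolding Nk_def set_lebesgue_integral_def
    by (intro Bochner_Integration.integral_cong) (auto simp: indicator_def)
  also have "\<dots> = (\<integral>z. indicator I z * ((\<Sum>j\<in>UNIV. a j * \<phi> j z) * (\<Sum>l\<in>UNIV. b l * \<phi> l z)) \<partial>lborel)"
  proof (rule integral_cong_AE)
    show "(\<lambda>z. indicator I z * M k u z * (indicator I z * M k v z)) \<in> borel_measurable lborel"
      using u(1) v(1) by measurable
    show "(\<lambda>z. indicator I z * ((\<Sum>j\<in>UNIV. a j * \<phi> j z) * (\<Sum>l\<in>UNIV. b l * \<phi> l z))) \<in> borel_measurable lborel"
      using I phi_L2 by measurable
    show "AE z in lborel. indicator I z * M k u z * (indicator I z * M k v z)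
        = indicator I z * ((\<Sum>j\<in>UNIV. a j * \<phi> j z) * (\<Sum>l\<in>UNIV. b l * \<phi> l z))"
      using u(2) v(2) by eventually_elim (auto simp: a_def b_def expand indicator_def)
  qed
  also have "\<dots> = l2_inner I (\<lambda>z. \<Sum>j\<in>UNIV. a j * \<phi> j z) (\<lambda>z. \<Sum>l\<in>UNIV. b l * \<phi> l z)"
    unfolding l2_inner_def set_lebesgue_integral_def by simp
  also have "\<dots> = (\<Sum>j\<in>UNIV. a j * b j)"
    by (simp add: l2_inner_sum_left[OF I L2_linear_combination[OF I phi_L2] phi_L2]
        l2_inner_orthonormal_expansion[OF I phi_L2 phi_orth])
  also have "\<dots> = (\<Sum>j\<in>UNIV. \<Sum>i\<in>UNIV. \<Sum>l\<in>UNIV. \<phi> i u * (S$i$j * S$l$j) * \<phi> l v)"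
    unfolding a_def b_def sum_product by (simp add: mult_ac)
  also have "\<dots> = (\<Sum>i\<in>UNIV. \<Sum>l\<in>UNIV. \<Sum>j\<in>UNIV. \<phi> i u * (S$i$j * S$l$j) * \<phi> l v)"
    by (subst sum.swap) (rule sum.cong[OF refl sum.swap])
  also have "\<dots> = (\<Sum>i\<in>UNIV. \<Sum>l\<in>UNIV. \<phi> i u * (S ** transpose S)$i$l * \<phi> l v)"
    by (simp add: matrix_matrix_mult_def transpose_def sum_distrib_left sum_distrib_right)
  finally show ?thesis .
qed

lemma finite_rank_kernel_Nk:
  fixes \<phi> :: "'d::finite \<Rightarrow> real \<Rightarrow> real" and S :: "real^'d^'d"
  assumes I: "I \<in> sets lborel" and phi_L2: "\<And>j. L2 I (\<phi> j)"
    and phi_orth: "\<And>i j. l2_inner I (\<phi> i) (\<phi> j) = (if i = j then 1 else 0)"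
    and M_meas: "(\<lambda>(u, v). indicator I u * indicator I v * M k u v) \<in> borel_measurable (lborel \<Otimes>\<^sub>M lborel)"
    and M: "finite_rank_kernel I (M k) \<phi> S"
  shows "finite_rank_kernel I (Nk I M k) \<phi> (S ** transpose S)"
proof -
  \<comment> \<open>the expansion fixes N_k(u,v) only off a null set of v, so the measurability of the
    sections of N_k has to come from the joint measurability of M_k\<close>
  define Mh where "Mh u v = indicator I u * indicator I v * M k u v" for u v
  have [measurable]: "(\<lambda>(u, v). Mh u v) \<in> borel_measurable (lborel \<Otimes>\<^sub>M lborel)" "I \<in> sets borel"
    using M_meas I unfolding Mh_def by auto
  have Nk_meas: "(\<lambda>v. indicator I v * Nk I M k u v) \<in> borel_measurable lborel" if "u \<in> I" for u
  proof -
    have "indicator I v * Nk I M k u v = (\<integral>z. Mh u z * Mh v z \<partial>lborel)" for v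
      unfolding Nk_def set_lebesgue_integral_def Mh_def using that
      by (auto simp: indicator_def intro!: Bochner_Integration.integral_cong)
    moreover have "(\<lambda>v. \<integral>z. Mh u z * Mh v z \<partial>lborel) \<in> borel_measurable lborel"
      by (rule lborel.borel_measurable_lebesgue_integral) measurable
    ultimately show ?thesis
      by simp
  qed
  show ?thesis
    using M unfolding finite_rank_kernel_def
  proof eventually_elim
    case (elim u)
    show ?case
    proof (intro impI conjI)
      assume "u \<in> I"
      then show "(\<lambda>v. indicator I v * Nk I M k u v) \<in> borel_measurable lborel"
        by (rule Nk_meas)
      show "AE v in lborel. v \<in> I \<longrightarrow>
          Nk I M k u v = (\<Sum>i\<in>UNIV. \<Sum>l\<in>UNIV. \<phi> i u * (S ** transpose S) $ i $ l * \<phi> l v)"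
        using M unfolding finite_rank_kernel_def
        by eventually_elim (use elim \<open>u \<in> I\<close> in \<open>auto intro!: Nk_eq_expansion[OF I phi_L2 phi_orth]\<close>)
    qed
  qed
qed

section \<open>Product Lebesgue measure\<close>

lemma integrable_lborel_pair_tensor:
  fixes f g :: "real \<Rightarrow> real"
  assumes f: "integrable lborel f" and g: "integrable lborel g"
  shows "integrable (lborel \<Otimes>\<^sub>M lborel) (\<lambda>x. f (fst x) * g (snd x))"
proof (rule lborel_pair.Fubini_integrable)
  show "(\<lambda>x. f (fst x) * g (snd x)) \<in> borel_measurable (lborel \<Otimes>\<^sub>M lborel)"
    using f g by measurable
  have "(\<lambda>x. \<integral>y. norm (f (fst (x, y)) * g (snd (x, y))) \<partial>lborel) = (\<lambda>x. \<bar>f x\<bar> * (\<integral>y. \<bar>g y\<bar> \<partial>lborel))"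
    by (simp add: abs_mult)
  then show "integrable lborel (\<lambda>x. \<integral>y. norm (f (fst (x, y)) * g (snd (x, y))) \<partial>lborel)"
    using f by simp
  show "AE x in lborel. integrable lborel (\<lambda>y. f (fst (x, y)) * g (snd (x, y)))"
    using g by simp
qed

lemma integral_lborel_pair_tensor:
  fixes f g :: "real \<Rightarrow> real"
  assumes f: "integrable lborel f" and g: "integrable lborel g"
  shows "(\<integral>x. f (fst x) * g (snd x) \<partial>(lborel \<Otimes>\<^sub>M lborel)) = integral\<^sup>L lborel f * integral\<^sup>L lborel g"
proof -
  have "(\<integral>x. f (fst x) * g (snd x) \<partial>(lborel \<Otimes>\<^sub>M lborel)) = (\<integral>x. (\<integral>y. f x * g y \<partial>lborel) \<partial>lborel)"
    using integrable_lborel_pair_tensor[OF f g]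
    by (subst lborel_pair.integral_fst) (simp_all add: split_beta')
  then show ?thesis
    by simp
qed

lemma nn_integral_lborel_pair_tensor:
  fixes f g :: "real \<Rightarrow> ennreal"
  assumes [measurable]: "f \<in> borel_measurable borel" "g \<in> borel_measurable borel"
  shows "(\<integral>\<^sup>+x. f (fst x) * g (snd x) \<partial>(lborel \<Otimes>\<^sub>M lborel)) = (\<integral>\<^sup>+x. f x \<partial>lborel) * (\<integral>\<^sup>+x. g x \<partial>lborel)"
proof -
  have "(\<integral>\<^sup>+x. f (fst x) * g (snd x) \<partial>(lborel \<Otimes>\<^sub>M lborel)) = (\<integral>\<^sup>+x. \<integral>\<^sup>+y. f x * g y \<partial>lborel \<partial>lborel)"
    by (subst lborel.nn_integral_fst[symmetric]) (auto simp: split_beta')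
  then show ?thesis
    by (simp add: nn_integral_cmult nn_integral_multc)
qed

text \<open>Measurable rectangles form an Int-stable generator of the product \<sigma>-algebra, so the
  integrals of D over all measurable sets vanish by Dynkin's argument.\<close>

lemma AE_zero_if_rectangle_integrals_zero:
  fixes D :: "real \<times> real \<Rightarrow> real"
  assumes int: "integrable (lborel \<Otimes>\<^sub>M lborel) D"
    and rect: "\<And>A B. A \<in> sets borel \<Longrightarrow> B \<in> sets borel \<Longrightarrow>
        (\<integral>x. indicator A (fst x) * indicator B (snd x) * D x \<partial>(lborel \<Otimes>\<^sub>M lborel)) = 0"
  shows "AE x in lborel \<Otimes>\<^sub>M lborel. D x = 0"
proof (rule sigma_finite_measure.density_zero[OF sigma_finite_pair_measure[OF sigma_finite_lborel sigma_finite_lborel] int])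
  let ?G = "{a \<times> b | a b. a \<in> sets (lborel::real measure) \<and> b \<in> sets (lborel::real measure)}"
  let ?\<Omega> = "space (lborel::real measure) \<times> space (lborel::real measure)"
  fix S :: "(real \<times> real) set"
  assume "S \<in> sets (lborel \<Otimes>\<^sub>M lborel)"
  then have S: "S \<in> sigma_sets ?\<Omega> ?G"
    by (simp add: sets_pair_measure)
  show "set_lebesgue_integral (lborel \<Otimes>\<^sub>M lborel) S D = 0"
    using Int_stable_pair_measure_generator pair_measure_closed S
  proof (induction rule: sigma_sets_induct_disjoint)
    case (basic A)
    then obtain a b where ab: "A = a \<times> b" "a \<in> sets borel" "b \<in> sets borel"
      by auto
    show ?case
      using rect[OF ab(2,3)] unfolding set_lebesgue_integral_def ab(1) by (simp add: indicator_times)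
  next
    case empty
    show ?case
      by (simp add: set_lebesgue_integral_def)
  next
    case (compl A)
    have A: "A \<in> sets (lborel \<Otimes>\<^sub>M lborel)"
      using compl(1) by (simp add: sets_pair_measure)
    have "set_lebesgue_integral (lborel \<Otimes>\<^sub>M lborel) (?\<Omega> - A) D
        = (\<integral>x. D x - indicator A x * D x \<partial>(lborel \<Otimes>\<^sub>M lborel))"
      unfolding set_lebesgue_integral_def
      by (intro Bochner_Integration.integral_cong) (auto simp: indicator_def)
    also have "\<dots> = (\<integral>x. D x \<partial>(lborel \<Otimes>\<^sub>M lborel)) - (\<integral>x. indicator A x * D x \<partial>(lborel \<Otimes>\<^sub>M lborel))"
      using int integrable_mult_indicator[OF A int] by (intro Bochner_Integration.integral_diff) auto
    also have "\<dots> = 0"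
      using rect[of UNIV UNIV] compl(2) unfolding set_lebesgue_integral_def by simp
    finally show ?case .
  next
    case (union A)
    have A: "A i \<in> sets (lborel \<Otimes>\<^sub>M lborel)" for i
      using union(2) by (auto simp: sets_pair_measure)
    have "set_lebesgue_integral (lborel \<Otimes>\<^sub>M lborel) (\<Union>i. A i) D
        = (\<Sum>i. set_lebesgue_integral (lborel \<Otimes>\<^sub>M lborel) (A i) D)"
    proof (rule lebesgue_integral_countable_add)
      show "A i \<inter> A j = {}" if "i \<noteq> j" for i j
        using union(1) that by (auto simp: disjoint_family_on_def)
      show "set_integrable (lborel \<Otimes>\<^sub>M lborel) (\<Union>i. A i) D"
        unfolding set_integrable_def using A by (intro integrable_mult_indicator int) auto
    qed (rule A)
    also have "\<dots> = 0"
      using union(3) by simp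
    finally show ?case .
  qed
qed

section \<open>The curve process\<close>

locale curve_process =
  fixes P :: "'w measure" and I :: "real set"
    and X :: "int \<Rightarrow> 'w \<Rightarrow> real \<Rightarrow> real" and \<mu> :: "real \<Rightarrow> real"
    and M :: "nat \<Rightarrow> real \<Rightarrow> real \<Rightarrow> real"
    and lam :: "'d::finite \<Rightarrow> real" and \<phi> :: "'d \<Rightarrow> real \<Rightarrow> real"
  assumes prob: "prob_space P"
    and I_borel: "I \<in> sets borel"
    and I_finite: "emeasure lborel I < \<infinity>"
    and X_measurable: "\<And>t. (\<lambda>(\<omega>, u). X t \<omega> u) \<in> borel_measurable (P \<Otimes>\<^sub>M lborel)"
    and X_second_moment: "\<And>t. (\<integral>\<^sup>+ u\<in>I. (\<integral>\<^sup>+ \<omega>. ennreal ((X t \<omega> u)\<^sup>2) \<partial>P) \<partial>lborel) < \<infinity>"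
    and mean: "\<And>t u. u \<in> I \<Longrightarrow> (\<integral>\<omega>. X t \<omega> u \<partial>P) = \<mu> u"
    and cov: "\<And>t k u v. u \<in> I \<Longrightarrow> v \<in> I \<Longrightarrow>
          (\<integral>\<omega>. (X t \<omega> u - \<mu> u) * (X (t + int k) \<omega> v - \<mu> v) \<partial>P) = M k u v"
    and phi_L2: "\<And>j. L2 I (\<phi> j)"
    and phi_orth: "\<And>i j. l2_inner I (\<phi> i) (\<phi> j) = (if i = j then 1 else 0)"
    and spectral: "AE x in lborel \<Otimes>\<^sub>M lborel. fst x \<in> I \<longrightarrow> snd x \<in> I \<longrightarrow>
          M 0 (fst x) (snd x) = (\<Sum>j\<in>UNIV. lam j * \<phi> j (fst x) * \<phi> j (snd x))"
begin

sublocale P: prob_space P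
  by (rule prob)

sublocale PL: pair_sigma_finite P lborel
  unfolding pair_sigma_finite_def using P.sigma_finite_measure_axioms sigma_finite_lborel by simp

sublocale PLL: pair_sigma_finite P "lborel \<Otimes>\<^sub>M lborel"
  unfolding pair_sigma_finite_def
  by (intro conjI P.sigma_finite_measure_axioms sigma_finite_pair_measure sigma_finite_lborel)

declare I_borel [measurable] X_measurable [measurable]

lemma I_lborel: "I \<in> sets lborel"
  by simp

text \<open>\<mu> is not assumed measurable, so curves are centred by the mean of X_0, which is measurable
  and agrees with \<mu> on I. Everything is cut off outside I.\<close>

definition mean_curve :: "real \<Rightarrow> real" where
  "mean_curve u = (\<integral>\<omega>. X 0 \<omega> u \<partial>P)"

definition centred :: "int \<Rightarrow> 'w \<Rightarrow> real \<Rightarrow> real" where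
  "centred t \<omega> u = indicator I u * (X t \<omega> u - mean_curve u)"

definition score :: "int \<Rightarrow> (real \<Rightarrow> real) \<Rightarrow> 'w \<Rightarrow> real" where
  "score t g \<omega> = (\<integral>u. centred t \<omega> u * g u \<partial>lborel)"

definition autocov :: "nat \<Rightarrow> real \<Rightarrow> real \<Rightarrow> real" where
  "autocov k u v = indicator I u * indicator I v * M k u v"

lemma mean_eq_mean_curve: "u \<in> I \<Longrightarrow> (\<integral>\<omega>. X t \<omega> u \<partial>P) = mean_curve u"
  using mean[of u t] mean[of u 0] by (simp add: mean_curve_def)

lemma mean_curve_measurable [measurable]: "mean_curve \<in> borel_measurable borel"
  unfolding mean_curve_def by (rule P.borel_measurable_lebesgue_integral[simplified]) measurable

lemma centred_measurable [measurable]: "(\<lambda>(\<omega>, u). centred t \<omega> u) \<in> borel_measurable (P \<Otimes>\<^sub>M lborel)"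
  unfolding centred_def by measurable

lemma centred_measurable_section [measurable]:
  "\<omega> \<in> space P \<Longrightarrow> centred t \<omega> \<in> borel_measurable lborel"
  using measurable_compose[OF measurable_Pair1' centred_measurable] by simp

lemma autocov_eq_cov: "autocov k u v = (\<integral>\<omega>. centred t \<omega> u * centred (t + int k) \<omega> v \<partial>P)"
proof (cases "u \<in> I \<and> v \<in> I")
  case True
  then show ?thesis
    using cov[of u v t k] mean[of u 0] mean[of v 0]
    by (simp add: autocov_def centred_def mean_curve_def)
qed (auto simp: autocov_def centred_def)

lemma autocov_measurable [measurable]: "(\<lambda>(u, v). autocov k u v) \<in> borel_measurable (lborel \<Otimes>\<^sub>M lborel)"
proof -
  have "(\<lambda>x. \<integral>\<omega>. centred 0 \<omega> (fst x) * centred (0 + int k) \<omega> (snd x) \<partial>P)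
      \<in> borel_measurable (lborel \<Otimes>\<^sub>M lborel)"
    by (rule P.borel_measurable_lebesgue_integral) measurable
  then show ?thesis
    by (simp add: split_beta' autocov_eq_cov[where t=0])
qed

lemma mean_curve_square_le:
  assumes "u \<in> I"
  shows "ennreal ((mean_curve u)\<^sup>2) \<le> (\<integral>\<^sup>+\<omega>. ennreal ((X t \<omega> u)\<^sup>2) \<partial>P)"
proof (cases "integrable P (\<lambda>\<omega>. X t \<omega> u)")
  case True
  have "ennreal \<bar>mean_curve u\<bar> \<le> (\<integral>\<^sup>+\<omega>. ennreal \<bar>X t \<omega> u\<bar> * 1 \<partial>P)"
    using integral_norm_bound_ennreal[OF True] mean_eq_mean_curve[OF assms, of t] by simp
  then have "(ennreal \<bar>mean_curve u\<bar>)\<^sup>2 \<le> (\<integral>\<^sup>+\<omega>. ennreal \<bar>X t \<omega> u\<bar> * 1 \<partial>P)\<^sup>2"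
    by (simp add: power_mono)
  also have "\<dots> \<le> (\<integral>\<^sup>+\<omega>. (ennreal \<bar>X t \<omega> u\<bar>)\<^sup>2 \<partial>P) * (\<integral>\<^sup>+\<omega>. 1\<^sup>2 \<partial>P)"
    by (rule Cauchy_Schwarz_nn_integral) measurable
  also have "\<dots> = (\<integral>\<^sup>+\<omega>. ennreal ((X t \<omega> u)\<^sup>2) \<partial>P)"
  proof -
    have "(ennreal \<bar>x\<bar>)\<^sup>2 = ennreal (x\<^sup>2)" for x :: real
      by (subst ennreal_power) auto
    then show ?thesis
      by (simp add: P.emeasure_space_1)
  qed
  finally show ?thesis
    by (simp add: ennreal_power)
next
  case False
  then have "mean_curve u = 0"
    using mean_eq_mean_curve[OF assms, of t] by (simp add: not_integrable_integral_eq)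
  then show ?thesis
    by simp
qed

lemma centred_second_moment_finite: "(\<integral>\<^sup>+\<omega>. \<integral>\<^sup>+u. ennreal ((centred t \<omega> u)\<^sup>2) \<partial>lborel \<partial>P) < \<infinity>"
proof -
  have pointwise: "(\<integral>\<^sup>+\<omega>. ennreal ((centred t \<omega> u)\<^sup>2) \<partial>P)
      \<le> 4 * ((\<integral>\<^sup>+\<omega>. ennreal ((X t \<omega> u)\<^sup>2) \<partial>P) * indicator I u)" for u
  proof (cases "u \<in> I")
    case True
    have "(\<integral>\<^sup>+\<omega>. ennreal ((centred t \<omega> u)\<^sup>2) \<partial>P)
        \<le> (\<integral>\<^sup>+\<omega>. 2 * ennreal ((X t \<omega> u)\<^sup>2) + 2 * ennreal ((mean_curve u)\<^sup>2) \<partial>P)"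
    proof (rule nn_integral_mono)
      fix \<omega>
      have "(X t \<omega> u - mean_curve u)\<^sup>2 \<le> 2 * (X t \<omega> u)\<^sup>2 + 2 * (mean_curve u)\<^sup>2"
        using zero_le_power2[of "X t \<omega> u + mean_curve u"] by (simp add: power2_eq_square algebra_simps)
      then have "ennreal ((X t \<omega> u - mean_curve u)\<^sup>2) \<le> ennreal (2 * (X t \<omega> u)\<^sup>2 + 2 * (mean_curve u)\<^sup>2)"
        by (rule ennreal_leI)
      also have "\<dots> = 2 * ennreal ((X t \<omega> u)\<^sup>2) + 2 * ennreal ((mean_curve u)\<^sup>2)"
        by (subst ennreal_plus) (auto simp: ennreal_mult)
      finally show "ennreal ((centred t \<omega> u)\<^sup>2) \<le> 2 * ennreal ((X t \<omega> u)\<^sup>2) + 2 * ennreal ((mean_curve u)\<^sup>2)"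
        using True by (simp add: centred_def)
    qed
    also have "\<dots> = 2 * (\<integral>\<^sup>+\<omega>. ennreal ((X t \<omega> u)\<^sup>2) \<partial>P) + 2 * ennreal ((mean_curve u)\<^sup>2)"
      by (simp add: nn_integral_add nn_integral_cmult P.emeasure_space_1)
    also have "\<dots> \<le> 2 * (\<integral>\<^sup>+\<omega>. ennreal ((X t \<omega> u)\<^sup>2) \<partial>P) + 2 * (\<integral>\<^sup>+\<omega>. ennreal ((X t \<omega> u)\<^sup>2) \<partial>P)"
      using mean_curve_square_le[OF True, of t] by (intro add_left_mono mult_left_mono) auto
    also have "\<dots> = 4 * ((\<integral>\<^sup>+\<omega>. ennreal ((X t \<omega> u)\<^sup>2) \<partial>P) * indicator I u)"
      using True by (simp add: distrib_right[symmetric])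
    finally show ?thesis .
  qed (simp add: centred_def)
  have "(\<integral>\<^sup>+\<omega>. \<integral>\<^sup>+u. ennreal ((centred t \<omega> u)\<^sup>2) \<partial>lborel \<partial>P)
      = (\<integral>\<^sup>+u. \<integral>\<^sup>+\<omega>. ennreal ((centred t \<omega> u)\<^sup>2) \<partial>P \<partial>lborel)"
    by (rule PL.Fubini'[symmetric]) measurable
  also have "\<dots> \<le> (\<integral>\<^sup>+u. 4 * ((\<integral>\<^sup>+\<omega>. ennreal ((X t \<omega> u)\<^sup>2) \<partial>P) * indicator I u) \<partial>lborel)"
    by (intro nn_integral_mono pointwise)
  also have "\<dots> = 4 * (\<integral>\<^sup>+ u\<in>I. (\<integral>\<^sup>+ \<omega>. ennreal ((X t \<omega> u)\<^sup>2) \<partial>P) \<partial>lborel)"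
    by (rule nn_integral_cmult) measurable
  also have "\<dots> < \<infinity>"
    using X_second_moment[of t] by (simp add: ennreal_mult_less_top)
  finally show ?thesis .
qed

lemma AE_centred_square_integrable: "AE \<omega> in P. integrable lborel (\<lambda>u. (centred t \<omega> u)\<^sup>2)"
proof -
  have "AE \<omega> in P. (\<integral>\<^sup>+u. ennreal ((centred t \<omega> u)\<^sup>2) \<partial>lborel) \<noteq> \<infinity>"
    using centred_second_moment_finite[of t] by (intro nn_integral_PInf_AE) auto
  with AE_space show ?thesis
  proof eventually_elim
    case (elim \<omega>)
    then show ?case
      by (intro integrableI_bounded) (auto simp: top.not_eq_extremum)
  qed
qed

lemma integrable_centred_mult:
  assumes \<omega>: "\<omega> \<in> space P" "integrable lborel (\<lambda>u. (centred t \<omega> u)\<^sup>2)" and g: "L2 I g"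
  shows "integrable lborel (\<lambda>u. centred t \<omega> u * g u)"
proof (rule Bochner_Integration.integrable_bound)
  show "integrable lborel (\<lambda>u. (centred t \<omega> u)\<^sup>2 + indicator I u * (g u)\<^sup>2)"
    using \<omega> g unfolding L2_def set_integrable_def by auto
  show "(\<lambda>u. centred t \<omega> u * g u) \<in> borel_measurable lborel"
    using \<omega> g by measurable
  have "\<bar>centred t \<omega> u * g u\<bar> = \<bar>centred t \<omega> u * (indicator I u * g u)\<bar>" for u
    by (simp add: centred_def indicator_def)
  also have "\<dots> u \<le> (centred t \<omega> u)\<^sup>2 + (indicator I u * g u)\<^sup>2" for u
    by (rule abs_mult_le_sum_squares)
  also have "\<dots> u = (centred t \<omega> u)\<^sup>2 + indicator I u * (g u)\<^sup>2" for u
    by (simp add: indicator_def power_mult_distrib)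
  finally have "\<bar>centred t \<omega> u * g u\<bar> \<le> (centred t \<omega> u)\<^sup>2 + indicator I u * (g u)\<^sup>2" for u .
  then show "AE u in lborel. norm (centred t \<omega> u * g u) \<le> norm ((centred t \<omega> u)\<^sup>2 + indicator I u * (g u)\<^sup>2)"
    by simp
qed

lemma score_measurable [measurable]:
  assumes "L2 I g"
  shows "score t g \<in> borel_measurable P"
proof -
  have [measurable]: "g \<in> borel_measurable borel"
    using assms by simp
  show ?thesis
    unfolding score_def by (rule lborel.borel_measurable_lebesgue_integral) measurable
qed

lemma integrable_centred_tensor:
  assumes g: "L2 I g" and h: "L2 I h"
  shows "integrable (P \<Otimes>\<^sub>M (lborel \<Otimes>\<^sub>M lborel))
    (\<lambda>(\<omega>, x). centred t \<omega> (fst x) * g (fst x) * (centred s \<omega> (snd x) * h (snd x)))"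
    (is "integrable _ (case_prod ?F)")
proof (rule integrableI_bounded)
  have [measurable]: "g \<in> borel_measurable borel" "h \<in> borel_measurable borel"
    using g h by simp_all
  show "case_prod ?F \<in> borel_measurable (P \<Otimes>\<^sub>M (lborel \<Otimes>\<^sub>M lborel))"
    unfolding split_beta' by measurable
  define gI where "gI u = indicator I u * g u" for u
  define hI where "hI u = indicator I u * h u" for u
  have [measurable]: "gI \<in> borel_measurable borel" "hI \<in> borel_measurable borel"
    unfolding gI_def hI_def by measurable
  define A where "A r \<omega> = (\<integral>\<^sup>+u. ennreal ((centred r \<omega> u)\<^sup>2) \<partial>lborel)" for r \<omega>
  define G where "G = (\<integral>\<^sup>+u. ennreal ((gI u)\<^sup>2) \<partial>lborel)"
  define H where "H = (\<integral>\<^sup>+u. ennreal ((hI u)\<^sup>2) \<partial>lborel)"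
  let ?B = "\<lambda>\<omega> x. ennreal ((centred t \<omega> (fst x))\<^sup>2) * ennreal ((hI (snd x))\<^sup>2)
    + ennreal ((gI (fst x))\<^sup>2) * ennreal ((centred s \<omega> (snd x))\<^sup>2)"
  have bound: "ennreal (norm (?F \<omega> x)) \<le> ?B \<omega> x" for \<omega> x
  proof -
    have F: "?F \<omega> x = centred t \<omega> (fst x) * gI (fst x) * (centred s \<omega> (snd x) * hI (snd x))"
      unfolding gI_def hI_def centred_def by (simp add: indicator_def)
    show ?thesis
      unfolding F real_norm_def by (rule ennreal_abs_mult_mult_le)
  qed
  have inner: "(\<integral>\<^sup>+x. ?B \<omega> x \<partial>(lborel \<Otimes>\<^sub>M lborel)) = A t \<omega> * H + G * A s \<omega>" if "\<omega> \<in> space P" for \<omega>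
  proof -
    have [measurable]: "centred t \<omega> \<in> borel_measurable borel" "centred s \<omega> \<in> borel_measurable borel"
      using centred_measurable_section[OF that] by auto
    have "(\<integral>\<^sup>+x. ennreal ((centred t \<omega> (fst x))\<^sup>2) * ennreal ((hI (snd x))\<^sup>2) \<partial>(lborel \<Otimes>\<^sub>M lborel)) = A t \<omega> * H"
      unfolding A_def H_def by (rule nn_integral_lborel_pair_tensor) measurable
    moreover have "(\<integral>\<^sup>+x. ennreal ((gI (fst x))\<^sup>2) * ennreal ((centred s \<omega> (snd x))\<^sup>2) \<partial>(lborel \<Otimes>\<^sub>M lborel)) = G * A s \<omega>"
      unfolding A_def G_def by (rule nn_integral_lborel_pair_tensor) measurable
    ultimately show ?thesis
      by (subst nn_integral_add) auto
  qed
  have "(\<integral>\<^sup>+p. ennreal (norm (case_prod ?F p)) \<partial>(P \<Otimes>\<^sub>M (lborel \<Otimes>\<^sub>M lborel)))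
      \<le> (\<integral>\<^sup>+p. ?B (fst p) (snd p) \<partial>(P \<Otimes>\<^sub>M (lborel \<Otimes>\<^sub>M lborel)))"
    using bound by (intro nn_integral_mono) (simp add: split_beta')
  also have "\<dots> = (\<integral>\<^sup>+\<omega>. \<integral>\<^sup>+x. ?B \<omega> x \<partial>(lborel \<Otimes>\<^sub>M lborel) \<partial>P)"
    by (rule sigma_finite_measure.nn_integral_fst[OF sigma_finite_pair_measure[OF sigma_finite_lborel sigma_finite_lborel], symmetric, where f="\<lambda>p. ?B (fst p) (snd p)", simplified]) measurable
  also have "\<dots> = (\<integral>\<^sup>+\<omega>. A t \<omega> * H + G * A s \<omega> \<partial>P)"
    by (intro nn_integral_cong) (simp add: inner)
  also have "\<dots> = (\<integral>\<^sup>+\<omega>. A t \<omega> \<partial>P) * H + G * (\<integral>\<^sup>+\<omega>. A s \<omega> \<partial>P)"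
    unfolding A_def by (simp add: nn_integral_add nn_integral_cmult nn_integral_multc)
  also have "\<dots> < \<infinity>"
    using centred_second_moment_finite[of t] centred_second_moment_finite[of s]
      L2_nn_integral_square_finite[OF g] L2_nn_integral_square_finite[OF h]
    unfolding A_def G_def H_def gI_def hI_def by (simp add: ennreal_mult_less_top)
  finally show "(\<integral>\<^sup>+p. ennreal (norm (case_prod ?F p)) \<partial>(P \<Otimes>\<^sub>M (lborel \<Otimes>\<^sub>M lborel))) < \<infinity>" .
qed

lemma score_cross_moment:
  assumes g: "L2 I g" and h: "L2 I h"
  shows "integrable P (\<lambda>\<omega>. score t g \<omega> * score (t + int k) h \<omega>)"
    and "integrable (lborel \<Otimes>\<^sub>M lborel) (\<lambda>x. g (fst x) * h (snd x) * autocov k (fst x) (snd x))"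
    and "(\<integral>\<omega>. score t g \<omega> * score (t + int k) h \<omega> \<partial>P)
       = (\<integral>x. g (fst x) * h (snd x) * autocov k (fst x) (snd x) \<partial>(lborel \<Otimes>\<^sub>M lborel))"
proof -
  define s where "s = t + int k"
  define F where "F \<omega> x = centred t \<omega> (fst x) * g (fst x) * (centred s \<omega> (snd x) * h (snd x))" for \<omega> x
  have F: "integrable (P \<Otimes>\<^sub>M (lborel \<Otimes>\<^sub>M lborel)) (case_prod F)"
    unfolding F_def by (rule integrable_centred_tensor[OF g h])
  have fst_eq: "AE \<omega> in P. (\<integral>x. F \<omega> x \<partial>(lborel \<Otimes>\<^sub>M lborel)) = score t g \<omega> * score s h \<omega>"
    using AE_space AE_centred_square_integrable[of t] AE_centred_square_integrable[of s]
  proof eventually_elim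
    case (elim \<omega>)
    show ?case
      unfolding F_def score_def
      by (rule integral_lborel_pair_tensor[OF integrable_centred_mult[OF elim(1,2) g]
            integrable_centred_mult[OF elim(1,3) h]])
  qed
  have snd_eq: "(\<integral>\<omega>. F \<omega> x \<partial>P) = g (fst x) * h (snd x) * autocov k (fst x) (snd x)" for x
  proof -
    have "(\<integral>\<omega>. F \<omega> x \<partial>P) = (\<integral>\<omega>. (g (fst x) * h (snd x)) * (centred t \<omega> (fst x) * centred s \<omega> (snd x)) \<partial>P)"
      unfolding F_def by (simp add: algebra_simps)
    then show ?thesis
      by (simp add: autocov_eq_cov[of k _ _ t] s_def)
  qed
  have int_fst: "integrable P (\<lambda>\<omega>. \<integral>x. F \<omega> x \<partial>(lborel \<Otimes>\<^sub>M lborel))"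
    using PLL.integrable_fst'[OF F] by simp
  then have m: "(\<lambda>\<omega>. \<integral>x. F \<omega> x \<partial>(lborel \<Otimes>\<^sub>M lborel)) \<in> borel_measurable P"
    by auto
  have m': "(\<lambda>\<omega>. score t g \<omega> * score s h \<omega>) \<in> borel_measurable P"
    using g h by measurable
  show "integrable P (\<lambda>\<omega>. score t g \<omega> * score (t + int k) h \<omega>)"
    using integrable_cong_AE_imp[OF int_fst m' fst_eq] unfolding s_def by simp
  show "integrable (lborel \<Otimes>\<^sub>M lborel) (\<lambda>x. g (fst x) * h (snd x) * autocov k (fst x) (snd x))"
    using PLL.integrable_snd[OF F] snd_eq by simp
  have "(\<integral>\<omega>. score t g \<omega> * score s h \<omega> \<partial>P) = integral\<^sup>L (P \<Otimes>\<^sub>M (lborel \<Otimes>\<^sub>M lborel)) (case_prod F)"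
    using PLL.integral_fst'[OF F] integral_cong_AE[OF m m' fst_eq] by simp
  then show "(\<integral>\<omega>. score t g \<omega> * score (t + int k) h \<omega> \<partial>P)
      = (\<integral>x. g (fst x) * h (snd x) * autocov k (fst x) (snd x) \<partial>(lborel \<Otimes>\<^sub>M lborel))"
    using PLL.integral_snd[OF F] snd_eq unfolding s_def by simp
qed

lemma integral_autocov_zero:
  assumes g: "L2 I g" and h: "L2 I h"
  shows "(\<integral>x. g (fst x) * h (snd x) * autocov 0 (fst x) (snd x) \<partial>(lborel \<Otimes>\<^sub>M lborel))
       = (\<Sum>j\<in>UNIV. lam j * l2_inner I g (\<phi> j) * l2_inner I h (\<phi> j))"
proof -
  have [measurable]: "g \<in> borel_measurable borel" "h \<in> borel_measurable borel" "\<phi> j \<in> borel_measurable borel" for j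
    using g h phi_L2 by auto
  let ?T = "\<lambda>j x. lam j * ((indicator I (fst x) * (g (fst x) * \<phi> j (fst x)))
    * (indicator I (snd x) * (h (snd x) * \<phi> j (snd x))))"
  have int_g: "integrable lborel (\<lambda>u. indicator I u * (g u * \<phi> j u))"
    and int_h: "integrable lborel (\<lambda>u. indicator I u * (h u * \<phi> j u))" for j
    using L2_integrable_indicator_mult[OF I_lborel] g h phi_L2 by auto
  have "(\<integral>x. g (fst x) * h (snd x) * autocov 0 (fst x) (snd x) \<partial>(lborel \<Otimes>\<^sub>M lborel))
      = (\<integral>x. (\<Sum>j\<in>UNIV. ?T j x) \<partial>(lborel \<Otimes>\<^sub>M lborel))"
  proof (rule integral_cong_AE)
    show "(\<lambda>x. g (fst x) * h (snd x) * autocov 0 (fst x) (snd x)) \<in> borel_measurable (lborel \<Otimes>\<^sub>M lborel)"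
      using autocov_measurable[of 0] unfolding split_beta' by measurable
    show "AE x in lborel \<Otimes>\<^sub>M lborel. g (fst x) * h (snd x) * autocov 0 (fst x) (snd x) = (\<Sum>j\<in>UNIV. ?T j x)"
      using spectral
      by eventually_elim (auto simp: autocov_def indicator_def sum_distrib_left algebra_simps)
  qed measurable
  also have "\<dots> = (\<Sum>j\<in>UNIV. lam j * ((\<integral>u. indicator I u * (g u * \<phi> j u) \<partial>lborel)
      * (\<integral>u. indicator I u * (h u * \<phi> j u) \<partial>lborel)))"
    using integrable_lborel_pair_tensor[OF int_g int_h] integral_lborel_pair_tensor[OF int_g int_h]
    by (simp add: Bochner_Integration.integral_sum)
  finally show ?thesis
    unfolding l2_inner_def set_lebesgue_integral_def by (simp add: mult.assoc)
qed

text \<open>The residual r of f after projection onto span{\<phi>_j} has E(score t r)^2 = <r, M_0 r> = 0 by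
  the spectral form of M_0: each centred curve lies in span{\<phi>_j} almost surely.\<close>

lemma score_expansion:
  assumes f: "L2 I f"
  shows "AE \<omega> in P. score t f \<omega> = (\<Sum>i\<in>UNIV. l2_inner I (\<phi> i) f * score t (\<phi> i) \<omega>)"
proof -
  define c where "c i = l2_inner I (\<phi> i) f" for i
  define r where "r u = f u - (\<Sum>i\<in>UNIV. c i * \<phi> i u)" for u
  have proj: "L2 I (\<lambda>u. \<Sum>i\<in>UNIV. c i * \<phi> i u)"
    by (rule L2_linear_combination[OF I_lborel phi_L2])
  have r: "L2 I r"
    unfolding r_def by (rule L2_diff[OF I_lborel f proj])
  have r_orth: "l2_inner I r (\<phi> j) = 0" for j
  proof -
    have "l2_inner I r (\<phi> j) = l2_inner I f (\<phi> j) - l2_inner I (\<lambda>u. \<Sum>i\<in>UNIV. c i * \<phi> i u) (\<phi> j)"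
      unfolding r_def by (rule l2_inner_diff_left[OF I_lborel f proj phi_L2])
    also have "l2_inner I (\<lambda>u. \<Sum>i\<in>UNIV. c i * \<phi> i u) (\<phi> j) = c j"
      using l2_inner_orthonormal_expansion[OF I_lborel phi_L2 phi_orth] by (simp add: l2_inner_commute)
    finally show ?thesis
      unfolding c_def by (simp add: l2_inner_commute)
  qed
  have "(\<integral>\<omega>. score t r \<omega> * score t r \<omega> \<partial>P) = 0"
    using score_cross_moment(3)[OF r r, of t 0] integral_autocov_zero[OF r r] r_orth by simp
  then have "AE \<omega> in P. score t r \<omega> * score t r \<omega> = 0"
    using integral_nonneg_eq_0_iff_AE[OF score_cross_moment(1)[OF r r, of t 0]] by simp
  with AE_space AE_centred_square_integrable[of t] show ?thesis
  proof eventually_elim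
    case (elim \<omega>)
    have "score t r \<omega> = (\<integral>u. centred t \<omega> u * f u - (\<Sum>i\<in>UNIV. c i * (centred t \<omega> u * \<phi> i u)) \<partial>lborel)"
      unfolding score_def r_def by (simp add: algebra_simps sum_distrib_left)
    also have "\<dots> = score t f \<omega> - (\<Sum>i\<in>UNIV. c i * score t (\<phi> i) \<omega>)"
      unfolding score_def
      using integrable_centred_mult[OF elim(1,2) f] integrable_centred_mult[OF elim(1,2) phi_L2]
      by (simp add: Bochner_Integration.integral_sum)
    finally show ?case
      using elim(3) unfolding c_def by simp
  qed
qed

definition Sigma :: "nat \<Rightarrow> real^'d^'d" where
  "Sigma k = (\<chi> i j. \<integral>\<omega>. score 0 (\<phi> i) \<omega> * score (int k) (\<phi> j) \<omega> \<partial>P)"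

lemma integral_autocov_bilinear:
  assumes g: "L2 I g" and h: "L2 I h"
  shows "(\<integral>x. g (fst x) * h (snd x) * autocov k (fst x) (snd x) \<partial>(lborel \<Otimes>\<^sub>M lborel))
       = (\<Sum>i\<in>UNIV. \<Sum>j\<in>UNIV. l2_inner I (\<phi> i) g * l2_inner I (\<phi> j) h * Sigma k $ i $ j)"
proof -
  let ?c = "\<lambda>i j. l2_inner I (\<phi> i) g * l2_inner I (\<phi> j) h"
  have "(\<integral>x. g (fst x) * h (snd x) * autocov k (fst x) (snd x) \<partial>(lborel \<Otimes>\<^sub>M lborel))
      = (\<integral>\<omega>. score 0 g \<omega> * score (int k) h \<omega> \<partial>P)"
    using score_cross_moment(3)[OF g h, of 0 k] by simp
  also have "\<dots> = (\<integral>\<omega>. (\<Sum>i\<in>UNIV. \<Sum>j\<in>UNIV. ?c i j * (score 0 (\<phi> i) \<omega> * score (int k) (\<phi> j) \<omega>)) \<partial>P)"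
  proof (rule integral_cong_AE)
    show "(\<lambda>\<omega>. score 0 g \<omega> * score (int k) h \<omega>) \<in> borel_measurable P"
      using g h by measurable
    show "(\<lambda>\<omega>. \<Sum>i\<in>UNIV. \<Sum>j\<in>UNIV. ?c i j * (score 0 (\<phi> i) \<omega> * score (int k) (\<phi> j) \<omega>)) \<in> borel_measurable P"
      using phi_L2 by measurable
    show "AE \<omega> in P. score 0 g \<omega> * score (int k) h \<omega>
        = (\<Sum>i\<in>UNIV. \<Sum>j\<in>UNIV. ?c i j * (score 0 (\<phi> i) \<omega> * score (int k) (\<phi> j) \<omega>))"
      using score_expansion[OF g, of 0] score_expansion[OF h, of "int k"]
      by eventually_elim (simp add: sum_product algebra_simps)
  qed
  also have "\<dots> = (\<Sum>i\<in>UNIV. \<Sum>j\<in>UNIV. ?c i j * Sigma k $ i $ j)"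
    using score_cross_moment(1)[OF phi_L2 phi_L2, where t=0 and k=k]
    by (simp add: Sigma_def Bochner_Integration.integral_sum)
  finally show ?thesis .
qed

definition autocov_expansion :: "nat \<Rightarrow> real \<Rightarrow> real \<Rightarrow> real" where
  "autocov_expansion k u v =
     indicator I u * indicator I v * (\<Sum>i\<in>UNIV. \<Sum>j\<in>UNIV. \<phi> i u * Sigma k $ i $ j * \<phi> j v)"

lemma autocov_expansion_tensor:
  assumes g: "L2 I g" and h: "L2 I h"
  shows "integrable (lborel \<Otimes>\<^sub>M lborel) (\<lambda>x. g (fst x) * h (snd x) * autocov_expansion k (fst x) (snd x))"
    and "(\<integral>x. g (fst x) * h (snd x) * autocov_expansion k (fst x) (snd x) \<partial>(lborel \<Otimes>\<^sub>M lborel))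
       = (\<Sum>i\<in>UNIV. \<Sum>j\<in>UNIV. l2_inner I (\<phi> i) g * l2_inner I (\<phi> j) h * Sigma k $ i $ j)"
proof -
  define a where "a i = (\<lambda>u. indicator I u * (\<phi> i u * g u))" for i
  define b where "b j = (\<lambda>v. indicator I v * (\<phi> j v * h v))" for j
  have a: "integrable lborel (a i)" and b: "integrable lborel (b j)" for i j
    unfolding a_def b_def using L2_integrable_indicator_mult[OF I_lborel phi_L2] g h by auto
  have eq: "g (fst x) * h (snd x) * autocov_expansion k (fst x) (snd x)
      = (\<Sum>i\<in>UNIV. \<Sum>j\<in>UNIV. Sigma k $ i $ j * (a i (fst x) * b j (snd x)))" for x
    unfolding autocov_expansion_def a_def b_def by (simp add: sum_distrib_left algebra_simps)
  show "integrable (lborel \<Otimes>\<^sub>M lborel) (\<lambda>x. g (fst x) * h (snd x) * autocov_expansion k (fst x) (snd x))"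
    unfolding eq
    by (intro Bochner_Integration.integrable_sum Bochner_Integration.integrable_mult_right
        integrable_lborel_pair_tensor a b)
  have "(\<integral>x. g (fst x) * h (snd x) * autocov_expansion k (fst x) (snd x) \<partial>(lborel \<Otimes>\<^sub>M lborel))
      = (\<Sum>i\<in>UNIV. \<Sum>j\<in>UNIV. Sigma k $ i $ j * (integral\<^sup>L lborel (a i) * integral\<^sup>L lborel (b j)))"
    unfolding eq
    by (simp add: Bochner_Integration.integral_sum integrable_lborel_pair_tensor[OF a b]
        integral_lborel_pair_tensor[OF a b] del: integral_mult_right_zero)
  then show "(\<integral>x. g (fst x) * h (snd x) * autocov_expansion k (fst x) (snd x) \<partial>(lborel \<Otimes>\<^sub>M lborel))
      = (\<Sum>i\<in>UNIV. \<Sum>j\<in>UNIV. l2_inner I (\<phi> i) g * l2_inner I (\<phi> j) h * Sigma k $ i $ j)"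
    by (simp add: l2_inner_def set_lebesgue_integral_def a_def b_def mult_ac)
qed

text \<open>Both kernels have the same integrals against all indicator rectangles.\<close>

lemma autocov_eq_expansion_AE:
  "AE x in lborel \<Otimes>\<^sub>M lborel. autocov k (fst x) (snd x) = autocov_expansion k (fst x) (snd x)"
proof -
  have L2_ind: "L2 I (indicator A)" if "A \<in> sets borel" for A
    using L2_indicator[OF I_lborel I_finite that] .
  have one: "L2 I (indicator UNIV)"
    by (rule L2_ind) simp
  define D where "D x = autocov k (fst x) (snd x) - autocov_expansion k (fst x) (snd x)" for x
  have "AE x in lborel \<Otimes>\<^sub>M lborel. D x = 0"
  proof (rule AE_zero_if_rectangle_integrals_zero)
    show "integrable (lborel \<Otimes>\<^sub>M lborel) D"
      using score_cross_moment(2)[OF one one, where k=k] autocov_expansion_tensor(1)[OF one one, where k=k]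
      unfolding D_def by simp
    fix A B :: "real set"
    assume "A \<in> sets borel" "B \<in> sets borel"
    then have A: "L2 I (indicator A)" and B: "L2 I (indicator B)"
      by (simp_all add: L2_ind)
    show "(\<integral>x. indicator A (fst x) * indicator B (snd x) * D x \<partial>(lborel \<Otimes>\<^sub>M lborel)) = 0"
      using score_cross_moment(2)[OF A B, where k=k] integral_autocov_bilinear[OF A B, where k=k]
        autocov_expansion_tensor[OF A B, where k=k]
      unfolding D_def right_diff_distrib by (simp add: Bochner_Integration.integral_diff)
  qed
  then show ?thesis
    unfolding D_def by simp
qed

lemma finite_rank_kernel_M: "finite_rank_kernel I (M k) \<phi> (Sigma k)"
proof -
  have "AE u in lborel. AE v in lborel. autocov k u v = autocov_expansion k u v"
    using lborel_pair.AE_pair[OF autocov_eq_expansion_AE[of k]] by simp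
  then show ?thesis
    unfolding finite_rank_kernel_def
  proof eventually_elim
    case (elim u)
    show ?case
    proof (intro impI conjI)
      assume "u \<in> I"
      then have "(\<lambda>v. indicator I v * M k u v) = autocov k u"
        by (auto simp: autocov_def indicator_def)
      then show "(\<lambda>v. indicator I v * M k u v) \<in> borel_measurable lborel"
        by simp
      show "AE v in lborel. v \<in> I \<longrightarrow> M k u v = (\<Sum>i\<in>UNIV. \<Sum>j\<in>UNIV. \<phi> i u * Sigma k $ i $ j * \<phi> j v)"
        using elim by eventually_elim (use \<open>u \<in> I\<close> in \<open>auto simp: autocov_def autocov_expansion_def\<close>)
    qed
  qed
qed

lemma nonzero_eigenspace_is_Nk:
  assumes "rank (Sigma k) = CARD('d)"
  shows "nonzero_eigenspace_is I (Nk I M k) \<phi>"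
proof (rule nonzero_eigenspace_is_finite_rank_kernel[OF I_lborel phi_L2 phi_orth])
  show "transpose (Sigma k ** transpose (Sigma k)) = Sigma k ** transpose (Sigma k)"
    by (simp add: matrix_transpose_mul)
  show "x \<noteq> 0 \<Longrightarrow> x \<bullet> ((Sigma k ** transpose (Sigma k)) *v x) > 0" for x
    by (rule mult_transpose_self_pos_def[OF assms])
  show "finite_rank_kernel I (Nk I M k) \<phi> (Sigma k ** transpose (Sigma k))"
    using autocov_measurable[of k] unfolding autocov_def
    by (intro finite_rank_kernel_Nk[OF I_lborel phi_L2 phi_orth] finite_rank_kernel_M)
qed

text \<open>Each N_k contributes a positive semidefinite coefficient matrix, and the term k_0 alone
  makes the sum positive definite.\<close>

lemma nonzero_eigenspace_is_Kp:
  assumes "rank (Sigma k) = CARD('d)" and "1 \<le> k" "k \<le> p"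
  shows "nonzero_eigenspace_is I (Kp I M p) \<phi>"
proof (rule nonzero_eigenspace_is_finite_rank_kernel[OF I_lborel phi_L2 phi_orth])
  let ?C = "\<Sum>k\<in>{1..p}. Sigma k ** transpose (Sigma k)"
  show "transpose ?C = ?C"
    by (simp add: transpose_sum matrix_transpose_mul)
  show "x \<bullet> (?C *v x) > 0" if "x \<noteq> 0" for x
  proof -
    have "0 < x \<bullet> ((Sigma k ** transpose (Sigma k)) *v x)"
      by (rule mult_transpose_self_pos_def[OF assms(1) that])
    also have "\<dots> \<le> (\<Sum>k\<in>{1..p}. x \<bullet> ((Sigma k ** transpose (Sigma k)) *v x))"
      using assms(2,3) by (intro member_le_sum) (auto simp: inner_mult_transpose_self)
    finally show ?thesis
      by (simp add: sum_matrix_vector_mult inner_sum_right)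
  qed
  have "Kp I M p = (\<lambda>u v. \<Sum>k\<in>{1..p}. Nk I M k u v)"
    by (simp add: fun_eq_iff Kp_def)
  then show "finite_rank_kernel I (Kp I M p) \<phi> ?C"
    using autocov_measurable unfolding autocov_def
    by (simp add: finite_rank_kernel_sum finite_rank_kernel_Nk[OF I_lborel phi_L2 phi_orth]
        finite_rank_kernel_M)
qed

lemma kl_score_eq_score: "kl_score I X \<mu> \<phi> t j \<omega> = score t (\<phi> j) \<omega>"
  unfolding kl_score_def score_def set_lebesgue_integral_def
  using mean[of _ 0] by (intro Bochner_Integration.integral_cong) (auto simp: centred_def mean_curve_def indicator_def)

end

theorem proposition1:
  fixes P :: "'w measure"
    and a b :: real
    and X \<epsilon> Y :: "int \<Rightarrow> 'w \<Rightarrow> real \<Rightarrow> real"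
    and \<mu> :: "real \<Rightarrow> real"
    and M :: "nat \<Rightarrow> real \<Rightarrow> real \<Rightarrow> real"
    and lam :: "'d::finite \<Rightarrow> real"
    and \<phi> :: "'d \<Rightarrow> real \<Rightarrow> real"
    and k0 :: nat
  defines "I \<equiv> {a..b}"
  assumes prob: "prob_space P"
    and ab: "a \<le> b"
    and Y_def: "\<And>t \<omega> u. Y t \<omega> u = X t \<omega> u + \<epsilon> t \<omega> u"
    and X_meas: "\<And>t. (\<lambda>(\<omega>, u). X t \<omega> u) \<in> borel_measurable (P \<Otimes>\<^sub>M lborel)"
    and eps_mean: "\<And>t u. u \<in> I \<Longrightarrow> (\<integral>\<omega>. \<epsilon> t \<omega> u \<partial>P) = 0"
    and eps_uncorr: "\<And>t s u v. t \<noteq> s \<Longrightarrow> u \<in> I \<Longrightarrow> v \<in> I \<Longrightarrow>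
          (\<integral>\<omega>. \<epsilon> t \<omega> u * \<epsilon> s \<omega> v \<partial>P) = 0"
    and moments: "\<And>t. (\<integral>\<^sup>+ u\<in>I. (\<integral>\<^sup>+ \<omega>. ennreal ((X t \<omega> u)\<^sup>2 + (\<epsilon> t \<omega> u)\<^sup>2) \<partial>P) \<partial>lborel) < \<infinity>"
    and mean: "\<And>t u. u \<in> I \<Longrightarrow> (\<integral>\<omega>. X t \<omega> u \<partial>P) = \<mu> u"
    and cov: "\<And>t k u v. u \<in> I \<Longrightarrow> v \<in> I \<Longrightarrow>
          (\<integral>\<omega>. (X t \<omega> u - \<mu> u) * (X (t + int k) \<omega> v - \<mu> v) \<partial>P) = M k u v"
    and X_eps_uncorr: "\<And>t k u v. u \<in> I \<Longrightarrow> v \<in> I \<Longrightarrow>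
          (\<integral>\<omega>. (X t \<omega> u - \<mu> u) * \<epsilon> (t + k) \<omega> v \<partial>P) = 0"
    and phi_L2: "\<And>j. L2 I (\<phi> j)"
    and phi_orth: "\<And>i j. l2_inner I (\<phi> i) (\<phi> j) = (if i = j then 1 else 0)"
    and lambda_pos: "\<And>j. lam j > 0"
    and spectral: "AE x in lborel \<Otimes>\<^sub>M lborel. fst x \<in> I \<longrightarrow> snd x \<in> I \<longrightarrow>
          M 0 (fst x) (snd x) = (\<Sum>j\<in>UNIV. lam j * \<phi> j (fst x) * \<phi> j (snd x))"
    and k0: "k0 \<ge> 1"
    and full_rank: "\<And>t. rank (\<chi> i j. \<integral>\<omega>. kl_score I X \<mu> \<phi> t i \<omega> * kl_score I X \<mu> \<phi> (t + int k0) j \<omega> \<partial>P)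
                        = CARD('d)"
  shows "nonzero_eigenspace_is I (Nk I M k0) \<phi>
         \<and> (\<forall>p. p \<ge> k0 \<longrightarrow> nonzero_eigenspace_is I (Kp I M p) \<phi>)"
proof -
  have X_second_moment: "(\<integral>\<^sup>+ u\<in>I. (\<integral>\<^sup>+ \<omega>. ennreal ((X t \<omega> u)\<^sup>2) \<partial>P) \<partial>lborel) < \<infinity>" for t
    using moments[of t] by (rule le_less_trans[rotated]) (intro nn_integral_mono mult_right_mono ennreal_leI; simp)
  interpret curve_process P I X \<mu> M lam \<phi>
    by (rule curve_process.intro[OF prob _ _ X_meas X_second_moment mean cov phi_L2 phi_orth spectral])
       (simp_all add: I_def emeasure_lborel_Icc_eq)
  have "rank (Sigma k0) = CARD('d)"
    using full_rank[of 0] by (simp add: Sigma_def kl_score_eq_score)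
  then show ?thesis
    using k0 nonzero_eigenspace_is_Nk nonzero_eigenspace_is_Kp by blast
qed

end
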